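(* Let $\mathcal{X}$ be a measurable space, $\mathcal{Y}$ a finite set, and $W:\mathcal{X}\to\mathcal{Y}$ a channel. Then for any $\lambda_1,\lambda_2>0$ with $\lambda_1+\lambda_2<1$, \[ \frac14\,\underline{d}_M\!\left(\sqrt{\widetilde{\mathcal{X}}}\right)\;\le\;\dot{C}_{\mathrm{DI}}(W)\;\le\;\liminf_{n\to\infty}\frac{1}{n\log n}\log N_{\mathrm{DI}}(n,\lambda_1,\lambda_2)\;\le\;\frac12\,\underline{d}_M\!\left(\sqrt{\widetilde{\mathcal{X}}}\right). \]
   Context: A channel $W:\mathcal{X}\to\mathcal{Y}$ is a measurable map $x\mapsto W_x\in\mathcal{P}(\mathcal{Y})$, where $\mathcal{P}(\mathcal{Y})$ is the set of probability distributions on $\mathcal{Y}$ (viewed as vectors in $\mathbb{R}^{\mathcal{Y}}$, with the Borel $\sigma$-algebra). For $x^n=x_1\dots x_n\in\mathcal{X}^n$, $W_{x^n}$ is the product distribution on $\mathcal{Y}^n$, $W_{x^n}(y^n)=\prod_{i=1}^n W_{x_i}(y_i)$. An $(n,N,\lambda_1,\lambda_2)$-deterministic identification (DI) code is a family $\{(u_j,\mathcal{E}_j):j\in[N]\}$ with $u_j\in\mathcal{X}^n$, $\mathcal{E}_j\subset\mathcal{Y}^n$, such that $W_{u_j}(\mathcal{E}_j)\ge 1-\lambda_1$ for all $j$ and $W_{u_j}(\mathcal{E}_k)\le\lambda_2$ for all $j\ne k$. $N_{\mathrm{DI}}(n,\lambda_1,\lambda_2)$ is the largest $N$ for which such a code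 exists. Logarithms are base 2. The (pessimistic, slightly superexponential) DI capacity is $\dot{C}_{\mathrm{DI}}(W)=\inf_{\lambda_1,\lambda_2>0}\liminf_{n\to\infty}\frac{1}{n\log n}\log N_{\mathrm{DI}}(n,\lambda_1,\lambda_2)$. Let $\sqrt{\widetilde{\mathcal{X}}}=\{(\sqrt{W_x(y)})_{y\in\mathcal{Y}}:x\in\mathcal{X}\}\subset\mathbb{R}^{\mathcal{Y}}$ with the Euclidean metric. For a nonempty bounded set $F$ in a Euclidean space, $\Gamma_\delta(F)$ denotes the minimum number of closed balls of radius $\delta$ centered at points of $F$ whose union contains $F$, and the lower Minkowski dimension is $\underline{d}_M(F)=\liminf_{\delta\to0}\frac{\log\Gamma_\delta(F)}{-\log\delta}$. *)

theory Defs
  imports "HOL-Analysis.Analysis"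
begin

definition channel :: "'x measure \<Rightarrow> ('x \<Rightarrow> 'y::finite \<Rightarrow> real) \<Rightarrow> bool" where
  "channel M W \<longleftrightarrow>
     (\<forall>x\<in>space M. (\<forall>y. 0 \<le> W x y) \<and> (\<Sum>y\<in>UNIV. W x y) = 1) \<and>
     (\<lambda>x. \<chi> y. W x y) \<in> borel_measurable M"

definition words :: "nat \<Rightarrow> (nat \<Rightarrow> 'y) set" where
  "words n = PiE {..<n} (\<lambda>_. UNIV)"

definition prodW :: "('x \<Rightarrow> 'y::finite \<Rightarrow> real) \<Rightarrow> nat \<Rightarrow> (nat \<Rightarrow> 'x) \<Rightarrow> (nat \<Rightarrow> 'y) set \<Rightarrow> real" where
  "prodW W n u E = (\<Sum>y\<in>E \<inter> words n. \<Prod>i<n. W (u i) (y i))"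

definition DI_code :: "'x measure \<Rightarrow> ('x \<Rightarrow> 'y::finite \<Rightarrow> real) \<Rightarrow> nat \<Rightarrow> nat \<Rightarrow> real \<Rightarrow> real
    \<Rightarrow> (nat \<Rightarrow> nat \<Rightarrow> 'x) \<Rightarrow> (nat \<Rightarrow> (nat \<Rightarrow> 'y) set) \<Rightarrow> bool" where
  "DI_code M W n N l1 l2 u E \<longleftrightarrow>
     (\<forall>j<N. \<forall>i<n. u j i \<in> space M) \<and>
     (\<forall>j<N. E j \<subseteq> words n) \<and>
     (\<forall>j<N. prodW W n (u j) (E j) \<ge> 1 - l1) \<and>
     (\<forall>j<N. \<forall>k<N. j \<noteq> k \<longrightarrow> prodW W n (u j) (E k) \<le> l2)"

definition N_DI :: "'x measure \<Rightarrow> ('x \<Rightarrow> 'y::finite \<Rightarrow> real) \<Rightarrow> nat \<Rightarrow> real \<Rightarrow> real \<Rightarrow> ereal" where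
  "N_DI M W n l1 l2 = (SUP N \<in> {N. \<exists>u E. DI_code M W n N l1 l2 u E}. ereal (real N))"

definition DI_rate :: "'x measure \<Rightarrow> ('x \<Rightarrow> 'y::finite \<Rightarrow> real) \<Rightarrow> real \<Rightarrow> real \<Rightarrow> nat \<Rightarrow> ereal" where
  "DI_rate M W l1 l2 n =
     (if N_DI M W n l1 l2 = \<infinity> then \<infinity>
      else ereal (log 2 (real_of_ereal (N_DI M W n l1 l2)) / (real n * log 2 (real n))))"

definition C_DI :: "'x measure \<Rightarrow> ('x \<Rightarrow> 'y::finite \<Rightarrow> real) \<Rightarrow> ereal" where
  "C_DI M W = (INF l \<in> {l::real\<times>real. 0 < fst l \<and> 0 < snd l}. liminf (DI_rate M W (fst l) (snd l)))"

definition cover_num :: "'a::metric_space set \<Rightarrow> real \<Rightarrow> nat" where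
  "cover_num F d = (LEAST k. \<exists>C. finite C \<and> card C = k \<and> C \<subseteq> F \<and> F \<subseteq> (\<Union>c\<in>C. cball c d))"

definition lower_minkowski_dim :: "'a::metric_space set \<Rightarrow> ereal" where
  "lower_minkowski_dim F =
     Liminf (at_right 0) (\<lambda>d. ereal (log 2 (real (cover_num F d)) / (- log 2 d)))"

definition sqrt_X :: "'x measure \<Rightarrow> ('x \<Rightarrow> 'y::finite \<Rightarrow> real) \<Rightarrow> (real^'y) set" where
  "sqrt_X M W = (\<lambda>x. \<chi> y. sqrt (W x y)) ` space M"

end

theory Submission
  imports Defs "HOL-Real_Asymp.Real_Asymp"
begin

text \<open>
  Converse: if corresponding letters of two codewords have square-root vectors at distance
  at most 2\<delta>, the Bhattacharyya coefficient of the two output distributions is at least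
  1 - 2n\<delta>^2, so their total-variation distance is O(\<delta> sqrt n). For \<delta> of order 1/sqrt n,
  two codewords of a good code must therefore differ after quantising every letter to a
  \<delta>-net of the square-root image, whence N \<le> Gamma_\<delta>^n and
  log N / (n log n) is at most about log Gamma_\<delta> / (2 log (1/\<delta>)).

  Achievability: take a maximal \<delta>-separated set of Gamma_\<delta> letters, \<delta> = n^(-1/4+\<eta>), and by
  a Gilbert-Varshamov argument about Gamma_\<delta>^((1-\<rho>)n) words over it with pairwise Hamming
  distance at least \<rho>n; keep only words of nearly equal empirical entropy. Decode with
  entropy-typical sets: Chebyshev bounds the first-kind error, and the second-kind error
  is bounded by the Bhattacharyya coefficient exp(-\<rho>n\<delta>^2/2), which is tiny because n\<delta>^2
  grows polynomially. This yields log N \<ge> (d/4 - o(1)) n log n.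
\<close>

abbreviation sqrt_vec :: "('y::finite \<Rightarrow> real) \<Rightarrow> real^'y" where
  "sqrt_vec p \<equiv> \<chi> y. sqrt (p y)"

abbreviation word_pmf :: "('x \<Rightarrow> 'y \<Rightarrow> real) \<Rightarrow> nat \<Rightarrow> (nat \<Rightarrow> 'x) \<Rightarrow> (nat \<Rightarrow> 'y) \<Rightarrow> real" where
  "word_pmf W n u y \<equiv> \<Prod>i<n. W (u i) (y i)"

lemma power2_le_4_exp: "(x::real) \<ge> 0 \<Longrightarrow> x\<^sup>2 \<le> 4 * exp x"
proof -
  assume x: "x \<ge> 0"
  have "x / 2 \<le> exp (x/2)" using exp_ge_add_one_self[of "x/2"] by linarith
  then have "(x/2)\<^sup>2 \<le> (exp (x/2))\<^sup>2" using x by (intro power_mono) auto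
  also have "(exp (x/2))\<^sup>2 = exp x" by (simp add: power2_eq_square exp_add[symmetric])
  finally show ?thesis by (simp add: power2_eq_square)
qed

lemma mult_ln_power2_le_4: "0 < (p::real) \<Longrightarrow> p \<le> 1 \<Longrightarrow> p * (ln p)\<^sup>2 \<le> 4"
proof -
  assume p: "0 < p" "p \<le> 1"
  have "(- ln p)\<^sup>2 \<le> 4 * exp (- ln p)" using p by (intro power2_le_4_exp) simp
  then have "(ln p)\<^sup>2 \<le> 4 / p" using p by (simp add: exp_minus divide_inverse)
  then show ?thesis using p by (simp add: field_simps)
qed

lemma neg_mult_ln_le_1: "0 \<le> (p::real) \<Longrightarrow> - (p * ln p) \<le> 1"
proof (cases "p = 0")
  case False
  assume "0 \<le> p"
  then have p: "0 < p" using False by simp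
  have "ln (1/p) \<le> 1/p - 1" using p by (intro ln_le_minus_one) auto
  then have "- ln p \<le> 1/p - 1" using p by (simp add: ln_div)
  then have "p * (- ln p) \<le> p * (1/p - 1)" using p by (intro mult_left_mono) auto
  moreover have "p * (1/p - 1) = 1 - p" using p by (simp add: field_simps)
  ultimately show ?thesis using p by linarith
qed simp

lemma power2_diff_le:
  fixes a b t :: real
  assumes "a \<ge> 0" "b \<ge> 0" "t > 0"
  shows "a\<^sup>2 - b\<^sup>2 \<le> t * (a - b)\<^sup>2 / 2 + (a + b)\<^sup>2 / (2 * t)"
proof -
  have "0 \<le> (t * (a - b) - (a + b))\<^sup>2" by simp
  then have "2 * t * ((a - b) * (a + b)) \<le> (t * (a - b))\<^sup>2 + (a + b)\<^sup>2"
    by (simp add: power2_eq_square algebra_simps)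
  then have "(a - b) * (a + b) \<le> t * (a - b)\<^sup>2 / 2 + (a + b)\<^sup>2 / (2 * t)"
    using assms(3) by (simp add: field_simps power2_eq_square)
  then show ?thesis by (simp add: power2_eq_square algebra_simps)
qed

lemma real_sqrt_prod: "sqrt (prod f A) = (\<Prod>i\<in>A. sqrt (f i))"
  by (induction A rule: infinite_finite_induct) (auto simp: real_sqrt_mult)

lemma sqrt_exp: "sqrt (exp x) = exp (x / 2)"
proof -
  have "exp x = (exp (x/2))\<^sup>2" by (simp add: power2_eq_square exp_add[symmetric])
  then show ?thesis by simp
qed

lemma real_div_nat_ge: "b > 0 \<Longrightarrow> real (a div b) \<ge> real a / real b - 1" for a b :: nat
proof -
  assume b: "b > 0"
  have "real a = real b * real (a div b) + real (a mod b)"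
    by (metis of_nat_add of_nat_mult div_mult_mod_eq mult.commute)
  moreover have "real (a mod b) < real b" using b by simp
  ultimately have "real a / real b < real (a div b) + 1" using b by (simp add: field_simps)
  then show ?thesis by simp
qed

lemma log2_div_neg_log2: "log 2 x / - log 2 d = ln x / - ln d"
  by (simp add: log_def field_simps)

lemma eventually_ln_div_le:
  assumes c: "c > 0" and e: "e > 0"
  shows "eventually (\<lambda>n. ln ((real n + 1) / c) \<le> (1 + e) * ln (real n)) sequentially"
proof -
  have "filterlim (\<lambda>n. ln (real n)) at_top sequentially"
    by (rule filterlim_compose[OF ln_at_top filterlim_real_sequentially])
  then have "eventually (\<lambda>n. (ln 2 - ln c) / e \<le> ln (real n)) sequentially"
    unfolding filterlim_at_top by auto
  moreover have "eventually (\<lambda>n. n \<ge> (1::nat)) sequentially" by (rule eventually_ge_at_top)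
  ultimately show ?thesis
  proof eventually_elim
    case (elim n)
    have "ln ((real n + 1) / c) = ln (real n + 1) - ln c" using c by (simp add: ln_div)
    also have "\<dots> \<le> ln (2 * real n) - ln c" using elim by (intro diff_right_mono ln_mono) auto
    also have "\<dots> = ln 2 + ln (real n) - ln c" using elim by (simp add: ln_mult)
    also have "\<dots> \<le> e * ln (real n) + ln (real n)" using elim e by (simp add: field_simps)
    finally show ?case by (simp add: algebra_simps)
  qed
qed

lemma Liminf_le_of_frequently:
  fixes f :: "_ \<Rightarrow> 'a::complete_linorder"
  assumes "frequently (\<lambda>x. f x \<le> c) F"
  shows "Liminf F f \<le> c"
proof (rule ccontr)
  assume "\<not> Liminf F f \<le> c"
  then have "eventually (\<lambda>x. c < f x) F" by (intro less_LiminfD) simp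
  then show False using assms by (simp add: frequently_def not_le)
qed

section \<open>Chebyshev and Bhattacharyya bounds\<close>

lemma chebyshev_sum:
  fixes P f :: "'a \<Rightarrow> real"
  assumes "finite A" "\<And>y. y \<in> A \<Longrightarrow> P y \<ge> 0" "\<tau> > 0"
  shows "(\<Sum>y\<in>{y\<in>A. \<tau> \<le> \<bar>f y\<bar>}. P y) \<le> (\<Sum>y\<in>A. P y * (f y)\<^sup>2) / \<tau>\<^sup>2"
proof -
  have "(\<Sum>y\<in>{y\<in>A. \<tau> \<le> \<bar>f y\<bar>}. P y) \<le> (\<Sum>y\<in>{y\<in>A. \<tau> \<le> \<bar>f y\<bar>}. P y * (f y)\<^sup>2 / \<tau>\<^sup>2)"
  proof (rule sum_mono)
    fix y assume y: "y \<in> {y\<in>A. \<tau> \<le> \<bar>f y\<bar>}"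
    have "\<tau>\<^sup>2 \<le> (f y)\<^sup>2" using y assms(3)
      by (metis (mono_tags) abs_le_square_iff abs_of_pos mem_Collect_eq)
    then have "1 \<le> (f y)\<^sup>2 / \<tau>\<^sup>2" using assms(3) by simp
    then show "P y \<le> P y * (f y)\<^sup>2 / \<tau>\<^sup>2"
      using assms(2)[of y] y mult_left_mono[of 1 "(f y)\<^sup>2 / \<tau>\<^sup>2" "P y"] by simp
  qed
  also have "\<dots> \<le> (\<Sum>y\<in>A. P y * (f y)\<^sup>2 / \<tau>\<^sup>2)"
    using assms by (intro sum_mono2) auto
  finally show ?thesis by (simp add: sum_divide_distrib)
qed

lemma sum_likelihood_ratio_le_bhattacharyya:
  fixes P Q :: "'a \<Rightarrow> real"
  assumes "finite A" "\<And>y. y \<in> A \<Longrightarrow> P y \<ge> 0" "\<And>y. y \<in> A \<Longrightarrow> Q y \<ge> 0" "c \<ge> 0"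
  shows "(\<Sum>y\<in>{y\<in>A. Q y \<le> c * P y}. Q y) \<le> sqrt c * (\<Sum>y\<in>A. sqrt (P y * Q y))"
proof -
  have "(\<Sum>y\<in>{y\<in>A. Q y \<le> c * P y}. Q y) \<le> (\<Sum>y\<in>{y\<in>A. Q y \<le> c * P y}. sqrt c * sqrt (P y * Q y))"
  proof (rule sum_mono)
    fix y assume y: "y \<in> {y\<in>A. Q y \<le> c * P y}"
    have q: "Q y \<ge> 0" "P y \<ge> 0" using y assms by auto
    have "Q y = sqrt (Q y) * sqrt (Q y)" using q by simp
    also have "\<dots> \<le> sqrt (c * P y) * sqrt (Q y)"
      using y q by (intro mult_right_mono real_sqrt_le_mono) auto
    finally show "Q y \<le> sqrt c * sqrt (P y * Q y)" by (simp add: real_sqrt_mult)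
  qed
  also have "\<dots> \<le> (\<Sum>y\<in>A. sqrt c * sqrt (P y * Q y))"
    using assms by (intro sum_mono2) (auto intro!: mult_nonneg_nonneg)
  finally show ?thesis by (simp add: sum_distrib_left)
qed

lemma bhattacharyya_eq_hellinger:
  fixes P Q :: "'a \<Rightarrow> real"
  assumes "\<And>y. y \<in> A \<Longrightarrow> P y \<ge> 0" "\<And>y. y \<in> A \<Longrightarrow> Q y \<ge> 0" "sum P A = 1" "sum Q A = 1"
  shows "(\<Sum>y\<in>A. sqrt (P y * Q y)) = 1 - (\<Sum>y\<in>A. (sqrt (P y) - sqrt (Q y))\<^sup>2) / 2"
proof -
  have "(\<Sum>y\<in>A. (sqrt (P y) - sqrt (Q y))\<^sup>2) = (\<Sum>y\<in>A. P y + Q y - 2 * sqrt (P y * Q y))"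
    by (rule sum.cong) (auto simp: power2_eq_square algebra_simps real_sqrt_mult assms)
  also have "\<dots> = 2 - 2 * (\<Sum>y\<in>A. sqrt (P y * Q y))"
    by (simp add: sum_subtractf sum.distrib sum_distrib_left assms)
  finally show ?thesis by (simp add: field_simps)
qed

text \<open>The free weight t comes from AM-GM applied to a^2 - b^2 = (a - b)(a + b)
  with a = sqrt P, b = sqrt Q.\<close>
lemma sum_diff_le_bhattacharyya:
  fixes P Q :: "'a \<Rightarrow> real"
  assumes A: "finite A" "E \<subseteq> A" and P: "\<And>y. y \<in> A \<Longrightarrow> P y \<ge> 0" "sum P A = 1"
    and Q: "\<And>y. y \<in> A \<Longrightarrow> Q y \<ge> 0" "sum Q A = 1" and t: "t > 0"
  defines "F \<equiv> \<Sum>y\<in>A. sqrt (P y * Q y)"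
  shows "sum P E - sum Q E \<le> t * (1 - F) + (1 + F) / t"
proof -
  let ?g = "\<lambda>y. t * (sqrt (P y) - sqrt (Q y))\<^sup>2 / 2 + (sqrt (P y) + sqrt (Q y))\<^sup>2 / (2 * t)"
  let ?X = "\<lambda>y. P y + Q y - 2 * sqrt (P y * Q y)" and ?Y = "\<lambda>y. P y + Q y + 2 * sqrt (P y * Q y)"
  have "(\<Sum>y\<in>E. (sqrt (P y))\<^sup>2 - (sqrt (Q y))\<^sup>2) = (\<Sum>y\<in>E. P y - Q y)"
    using A P(1) Q(1) by (intro sum.cong) auto
  then have "sum P E - sum Q E = (\<Sum>y\<in>E. (sqrt (P y))\<^sup>2 - (sqrt (Q y))\<^sup>2)"
    by (simp add: sum_subtractf)
  also have "\<dots> \<le> (\<Sum>y\<in>E. ?g y)"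
    using A P(1) Q(1) t by (intro sum_mono power2_diff_le) auto
  also have "\<dots> \<le> (\<Sum>y\<in>A. ?g y)"
    using A t by (intro sum_mono2) auto
  also have "\<dots> = (\<Sum>y\<in>A. t * ?X y / 2 + ?Y y / (2 * t))"
    using P(1) Q(1) by (intro sum.cong) (auto simp: power2_eq_square algebra_simps real_sqrt_mult)
  also have "\<dots> = t * (\<Sum>y\<in>A. ?X y) / 2 + (\<Sum>y\<in>A. ?Y y) / (2 * t)"
    by (simp only: sum.distrib flip: sum_divide_distrib sum_distrib_left)
  also have "\<dots> = t * (1 - F) + (1 + F) / t"
    using P(2) Q(2) t by (simp add: sum.distrib sum_subtractf sum_distrib_left F_def field_simps)
  finally show ?thesis .
qed

section \<open>Product distributions on words\<close>

lemma finite_words [simp]: "finite (words n :: (nat \<Rightarrow> 'y::finite) set)"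
  unfolding words_def by (auto intro!: finite_PiE)

lemma sum_words_prod:
  "(\<Sum>y\<in>words n. \<Prod>i<n. f i (y i)) = (\<Prod>i<n. \<Sum>a\<in>(UNIV::'y::finite set). (f i a::real))"
  unfolding words_def by (rule prod_sum_PiE[symmetric]) auto

lemma prodW_eq_sum: "E \<subseteq> words n \<Longrightarrow> prodW W n u E = (\<Sum>y\<in>E. word_pmf W n u y)"
  unfolding prodW_def by (simp add: Int_absorb2)

lemma bhattacharyya_words:
  fixes W :: "'x \<Rightarrow> 'y::finite \<Rightarrow> real"
  shows "(\<Sum>y\<in>words n. sqrt (word_pmf W n u y * word_pmf W n v y))
     = (\<Prod>i<n. \<Sum>a\<in>UNIV. sqrt (W (u i) a * W (v i) a))"
proof -
  have "(\<Sum>y\<in>words n. sqrt (word_pmf W n u y * word_pmf W n v y))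
     = (\<Sum>y\<in>words n. \<Prod>i<n. sqrt (W (u i) (y i) * W (v i) (y i)))"
    by (simp add: prod.distrib[symmetric] real_sqrt_prod flip: real_sqrt_mult)
  also have "\<dots> = (\<Prod>i<n. \<Sum>a\<in>UNIV. sqrt (W (u i) a * W (v i) a))"
    by (rule sum_words_prod)
  finally show ?thesis .
qed

text \<open>The cross terms vanish because each factor of the product measure sums to 1 and
  each centred coordinate to 0.\<close>
lemma variance_sum_words:
  fixes p g :: "nat \<Rightarrow> 'y::finite \<Rightarrow> real"
  assumes p1: "\<forall>i<n. sum (p i) UNIV = 1" and g0: "\<forall>i<n. (\<Sum>a\<in>UNIV. p i a * g i a) = 0"
  shows "(\<Sum>y\<in>words n. (\<Prod>i<n. p i (y i)) * (\<Sum>i<n. g i (y i))\<^sup>2)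
    = (\<Sum>i<n. \<Sum>a\<in>UNIV. p i a * (g i a)\<^sup>2)"
proof -
  have cross: "(\<Sum>y\<in>words n. (\<Prod>k<n. p k (y k)) * (g i (y i) * g j (y j)))
      = (if i = j then (\<Sum>a\<in>UNIV. p i a * (g i a)\<^sup>2) else 0)" if ij: "i < n" "j < n" for i j
  proof -
    define h where "h k a = p k a * (if k = i then g i a else 1) * (if k = j then g j a else 1)" for k a
    have "(\<Prod>k<n. p k (y k)) * (g i (y i) * g j (y j)) = (\<Prod>k<n. h k (y k))" for y
      using ij by (simp add: h_def prod.distrib prod.delta)
    then have "(\<Sum>y\<in>words n. (\<Prod>k<n. p k (y k)) * (g i (y i) * g j (y j))) = (\<Prod>k<n. \<Sum>a\<in>UNIV. h k a)"
      by (simp add: sum_words_prod)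
    also have "\<dots> = (if i = j then (\<Sum>a\<in>UNIV. p i a * (g i a)\<^sup>2) else 0)"
    proof (cases "i = j")
      case True
      have "(\<Prod>k<n. \<Sum>a\<in>UNIV. h k a) = (\<Prod>k<n. if k = i then (\<Sum>a\<in>UNIV. p i a * (g i a)\<^sup>2) else 1)"
        by (rule prod.cong) (auto simp: h_def True p1 power2_eq_square mult.assoc)
      then show ?thesis using True ij by (simp add: prod.delta)
    next
      case False
      have "(\<Sum>a\<in>UNIV. h i a) = 0" using False g0 ij by (simp add: h_def)
      then have "(\<Prod>k<n. \<Sum>a\<in>UNIV. h k a) = 0" using ij by (intro prod_zero) auto
      then show ?thesis using False by simp
    qed
    finally show ?thesis .
  qed
  have "(\<Sum>y\<in>words n. (\<Prod>i<n. p i (y i)) * (\<Sum>i<n. g i (y i))\<^sup>2)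
     = (\<Sum>y\<in>words n. \<Sum>i<n. \<Sum>j<n. (\<Prod>k<n. p k (y k)) * (g i (y i) * g j (y j)))"
  proof -
    have "(\<Sum>i<n. g i (y i))\<^sup>2 = (\<Sum>i<n. \<Sum>j<n. g i (y i) * g j (y j))" for y :: "nat \<Rightarrow> 'y"
      by (simp add: power2_eq_square sum_product)
    then show ?thesis by (simp add: sum_distrib_left)
  qed
  also have "\<dots> = (\<Sum>i<n. \<Sum>j<n. \<Sum>y\<in>words n. (\<Prod>k<n. p k (y k)) * (g i (y i) * g j (y j)))"
    by (subst sum.swap) (intro sum.cong refl sum.swap)
  also have "\<dots> = (\<Sum>i<n. \<Sum>a\<in>UNIV. p i a * (g i a)\<^sup>2)"
    by (simp add: cross sum.delta)
  finally show ?thesis .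
qed

lemma channelD:
  assumes "channel M W" "x \<in> space M"
  shows "W x y \<ge> 0" "sum (W x) UNIV = 1" "W x y \<le> 1"
proof -
  show "W x y \<ge> 0" "sum (W x) UNIV = 1" using assms unfolding channel_def by auto
  moreover have "W x y \<le> sum (W x) UNIV"
    using assms unfolding channel_def by (intro member_le_sum) auto
  ultimately show "W x y \<le> 1" by simp
qed

lemma word_pmf_nonneg: "channel M W \<Longrightarrow> \<forall>i<n. u i \<in> space M \<Longrightarrow> 0 \<le> word_pmf W n u y"
  by (intro prod_nonneg) (auto intro: channelD)

lemma sum_word_pmf:
  assumes "channel M W" "\<forall>i<n. u i \<in> space M"
  shows "(\<Sum>y\<in>words n. word_pmf W n u y) = 1"
proof -
  have "(\<Sum>y\<in>words n. word_pmf W n u y) = (\<Prod>i<n. \<Sum>a\<in>UNIV. W (u i) a)"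
    by (rule sum_words_prod)
  also have "\<dots> = 1" using assms by (intro prod.neutral) (auto intro: channelD)
  finally show ?thesis .
qed

lemma word_pmf_pos_letters:
  assumes "channel M W" "\<forall>i<n. u i \<in> space M" "word_pmf W n u y \<noteq> 0"
  shows "\<forall>i<n. 0 < W (u i) (y i)"
  using assms channelD(1)[OF assms(1)] by (force simp: less_le)

lemma bhattacharyya_letters:
  assumes "channel M W" "x \<in> space M" "x' \<in> space M"
  shows "(\<Sum>a\<in>UNIV. sqrt (W x a * W x' a)) = 1 - (dist (sqrt_vec (W x)) (sqrt_vec (W x')))\<^sup>2 / 2"
proof -
  have "(dist (sqrt_vec (W x)) (sqrt_vec (W x')))\<^sup>2 = (\<Sum>a\<in>UNIV. (sqrt (W x a) - sqrt (W x' a))\<^sup>2)"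
    unfolding dist_vec_def L2_set_def by (simp add: dist_real_def sum_nonneg)
  then show ?thesis using assms by (simp add: bhattacharyya_eq_hellinger channelD)
qed

lemma bounded_sqrt_X: "channel M W \<Longrightarrow> bounded (sqrt_X M W)"
  unfolding bounded_iff
proof (intro exI ballI)
  fix z assume ch: "channel M W" and "z \<in> sqrt_X M W"
  then obtain x where x: "x \<in> space M" "z = sqrt_vec (W x)" unfolding sqrt_X_def by auto
  have "norm z \<le> (\<Sum>i\<in>UNIV. \<bar>z $ i\<bar>)" by (rule norm_le_l1_cart)
  also have "\<dots> \<le> (\<Sum>i\<in>(UNIV::'b set). 1)"
    using x channelD[OF ch x(1)] by (intro sum_mono) auto
  finally show "norm z \<le> real CARD('b)" by simp
qed

section \<open>Covering numbers\<close>

lemma cover_num_attained: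
  fixes F :: "'a::heine_borel set"
  assumes "bounded F" "\<delta> > 0"
  shows "\<exists>C. finite C \<and> card C = cover_num F \<delta> \<and> C \<subseteq> F \<and> F \<subseteq> (\<Union>c\<in>C. cball c \<delta>)"
proof -
  have "closure F \<subseteq> (\<Union>c\<in>F. ball c \<delta>)"
  proof
    fix z assume "z \<in> closure F"
    then obtain c where "c \<in> F" "dist c z < \<delta>" using assms(2) closure_approachable by metis
    then show "z \<in> (\<Union>c\<in>F. ball c \<delta>)" by auto
  qed
  then obtain C where C: "C \<subseteq> F" "finite C" "closure F \<subseteq> (\<Union>c\<in>C. ball c \<delta>)"
    using compactE_image[of "closure F" F "\<lambda>c. ball c \<delta>"] assms(1) by auto
  then have "F \<subseteq> (\<Union>c\<in>C. cball c \<delta>)" using closure_subset[of F] ball_subset_cball by blast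
  with C have "\<exists>k C. finite C \<and> card C = k \<and> C \<subseteq> F \<and> F \<subseteq> (\<Union>c\<in>C. cball c \<delta>)" by blast
  then show ?thesis unfolding cover_num_def by (rule LeastI_ex)
qed

lemma cover_num_le:
  assumes "finite C" "C \<subseteq> F" "F \<subseteq> (\<Union>c\<in>C. cball c \<delta>)"
  shows "cover_num F \<delta> \<le> card C"
  unfolding cover_num_def using assms by (intro Least_le) auto

lemma cover_num_antimono:
  fixes F :: "'a::heine_borel set"
  assumes "bounded F" "0 < \<delta>" "\<delta> \<le> \<delta>'"
  shows "cover_num F \<delta>' \<le> cover_num F \<delta>"
proof -
  obtain C where C: "finite C" "card C = cover_num F \<delta>" "C \<subseteq> F" "F \<subseteq> (\<Union>c\<in>C. cball c \<delta>)"
    using cover_num_attained[OF assms(1,2)] by blast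
  have "F \<subseteq> (\<Union>c\<in>C. cball c \<delta>')" using C(4) subset_cball[OF assms(3)] by blast
  then show ?thesis using cover_num_le[OF C(1,3)] C(2) by simp
qed

lemma cover_num_pos:
  fixes F :: "'a::heine_borel set"
  assumes "bounded F" "0 < \<delta>" "F \<noteq> {}"
  shows "1 \<le> cover_num F \<delta>"
proof -
  obtain C where C: "finite C" "card C = cover_num F \<delta>" "F \<subseteq> (\<Union>c\<in>C. cball c \<delta>)"
    using cover_num_attained[OF assms(1,2)] by blast
  then have "C \<noteq> {}" using assms(3) by auto
  then have "card C > 0" using C(1) by (simp add: card_gt_0_iff)
  then show ?thesis using C(2) by simp
qed

text \<open>A maximal separated subset is a cover, so it cannot be smaller than the covering
  number.\<close>
lemma separated_subset_of_cover_num: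
  fixes f :: "'x \<Rightarrow> 'a::metric_space"
  assumes "k \<le> cover_num (f ` S) \<delta>" "\<delta> > 0"
  shows "\<exists>L \<subseteq> S. finite L \<and> card L = k \<and> (\<forall>a\<in>L. \<forall>b\<in>L. a \<noteq> b \<longrightarrow> \<delta> < dist (f a) (f b))"
  using assms(1)
proof (induction k)
  case 0
  show ?case by (intro exI[of _ "{}"]) auto
next
  case (Suc k)
  then obtain L where L: "L \<subseteq> S" "finite L" "card L = k"
    "\<forall>a\<in>L. \<forall>b\<in>L. a \<noteq> b \<longrightarrow> \<delta> < dist (f a) (f b)" by auto
  have "\<exists>x\<in>S. \<forall>a\<in>L. \<delta> < dist (f x) (f a)"
  proof (rule ccontr)
    assume "\<not> ?thesis"
    then have "f ` S \<subseteq> (\<Union>c\<in>f ` L. cball c \<delta>)" by (force simp: not_less dist_commute)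
    then have "cover_num (f ` S) \<delta> \<le> card (f ` L)" using L(1,2) by (intro cover_num_le) auto
    also have "\<dots> \<le> k" using L(3) card_image_le[OF L(2)] by simp
    finally show False using Suc.prems by simp
  qed
  then obtain x where x: "x \<in> S" "\<forall>a\<in>L. \<delta> < dist (f x) (f a)" by blast
  then have "x \<notin> L" using assms(2) by fastforce
  then show ?case using L x by (intro exI[of _ "insert x L"]) (auto simp: dist_commute)
qed

lemma lower_minkowski_dim_nonneg:
  fixes F :: "'a::heine_borel set"
  assumes "bounded F" "F \<noteq> {}"
  shows "0 \<le> lower_minkowski_dim F"
  unfolding lower_minkowski_dim_def
proof (rule Liminf_bounded)
  show "\<forall>\<^sub>F d in at_right 0. 0 \<le> ereal (log 2 (real (cover_num F d)) / - log 2 d)"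
    unfolding eventually_at_right_field
  proof (intro exI[of _ 1] conjI allI impI)
    fix d :: real assume d: "0 < d" "d < 1"
    have "0 \<le> log 2 (real (cover_num F d))" using cover_num_pos[OF assms(1) d(1) assms(2)] by simp
    moreover have "0 < - log 2 d" using d by simp
    ultimately have "0 \<le> log 2 (real (cover_num F d)) / - log 2 d" by (rule divide_nonneg_pos)
    then show "0 \<le> ereal (log 2 (real (cover_num F d)) / - log 2 d)" by simp
  qed simp
qed

section \<open>The converse bound\<close>

lemma prodW_diff_le_of_close:
  fixes W :: "'x \<Rightarrow> 'y::finite \<Rightarrow> real"
  assumes ch: "channel M W" and u: "\<forall>i<n. u i \<in> space M" and v: "\<forall>i<n. v i \<in> space M"
    and n: "n > 0" and \<delta>: "\<delta> > 0" "2 * \<delta>\<^sup>2 \<le> 1"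
    and close: "\<forall>i<n. dist (sqrt_vec (W (u i))) (sqrt_vec (W (v i))) \<le> 2 * \<delta>"
    and E: "E \<subseteq> words n"
  shows "prodW W n u E - prodW W n v E \<le> 4 * \<delta> * sqrt n"
proof -
  define F where "F = (\<Sum>y\<in>words n. sqrt (word_pmf W n u y * word_pmf W n v y))"
  define t where "t = 1 / (\<delta> * sqrt n)"
  have t: "t > 0" using \<delta> n by (simp add: t_def)
  have letter: "1 - 2 * \<delta>\<^sup>2 \<le> (\<Sum>a\<in>UNIV. sqrt (W (u i) a * W (v i) a))"
    "(\<Sum>a\<in>UNIV. sqrt (W (u i) a * W (v i) a)) \<le> 1" if i: "i < n" for i
  proof -
    have "(dist (sqrt_vec (W (u i))) (sqrt_vec (W (v i))))\<^sup>2 \<le> (2 * \<delta>)\<^sup>2"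
      using close i by (intro power_mono) auto
    then show "1 - 2 * \<delta>\<^sup>2 \<le> (\<Sum>a\<in>UNIV. sqrt (W (u i) a * W (v i) a))"
      "(\<Sum>a\<in>UNIV. sqrt (W (u i) a * W (v i) a)) \<le> 1"
      using bhattacharyya_letters[OF ch, of "u i" "v i"] u v i by (auto simp: power2_eq_square)
  qed
  have F_prod: "F = (\<Prod>i<n. \<Sum>a\<in>UNIV. sqrt (W (u i) a * W (v i) a))"
    unfolding F_def by (rule bhattacharyya_words)
  have F_le: "F \<le> 1"
    unfolding F_prod using letter \<delta> by (intro prod_le_1) (simp add: order_trans[OF _ letter(1)])
  have "1 + real n * (- 2 * \<delta>\<^sup>2) \<le> (1 - 2 * \<delta>\<^sup>2) ^ n"
    using \<delta> Bernoulli_inequality[of "- 2 * \<delta>\<^sup>2" n] by simp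
  also have "\<dots> \<le> F" unfolding F_prod using letter \<delta> prod_mono[of "{..<n}" "\<lambda>_. 1 - 2 * \<delta>\<^sup>2"] by simp
  finally have F_ge: "1 - F \<le> 2 * n * \<delta>\<^sup>2" by simp
  have "prodW W n u E - prodW W n v E \<le> t * (1 - F) + (1 + F) / t"
    unfolding prodW_eq_sum[OF E] F_def
    using word_pmf_nonneg[OF ch u] word_pmf_nonneg[OF ch v] sum_word_pmf[OF ch u] sum_word_pmf[OF ch v]
    by (intro sum_diff_le_bhattacharyya E t) auto
  also have "\<dots> \<le> t * (2 * n * \<delta>\<^sup>2) + 2 / t"
    using F_le F_ge t by (intro add_mono mult_left_mono divide_right_mono) auto
  also have "\<dots> = 4 * \<delta> * sqrt n"
    using \<delta> n by (simp add: t_def field_simps power2_eq_square)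
  finally show ?thesis .
qed

text \<open>Quantising each letter of a codeword to a nearest point of a minimal \<delta>-net is injective
  on a code, since codewords with equal quantisations would be too close to be distinguished.\<close>
lemma DI_code_card_le_cover_num_power:
  fixes W :: "'x \<Rightarrow> 'y::finite \<Rightarrow> real"
  assumes ch: "channel M W" and n: "n > 0" and \<delta>: "\<delta> > 0" "2 * \<delta>\<^sup>2 \<le> 1"
    and small: "4 * \<delta> * sqrt n < 1 - l1 - l2"
    and code: "DI_code M W n N l1 l2 u E"
  shows "N \<le> cover_num (sqrt_X M W) \<delta> ^ n"
proof -
  obtain C where C: "finite C" "card C = cover_num (sqrt_X M W) \<delta>" "C \<subseteq> sqrt_X M W"
     "sqrt_X M W \<subseteq> (\<Union>c\<in>C. cball c \<delta>)"
    using cover_num_attained[OF bounded_sqrt_X[OF ch] \<delta>(1)] by blast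
  define cen where "cen x = (SOME c. c \<in> C \<and> dist (sqrt_vec (W x)) c \<le> \<delta>)" for x
  have cen: "cen x \<in> C \<and> dist (sqrt_vec (W x)) (cen x) \<le> \<delta>" if "x \<in> space M" for x
  proof -
    have "sqrt_vec (W x) \<in> sqrt_X M W" using that unfolding sqrt_X_def by auto
    then obtain c where "c \<in> C" "dist c (sqrt_vec (W x)) \<le> \<delta>" using C(4) by (auto simp: mem_cball)
    then have "\<exists>c. c \<in> C \<and> dist (sqrt_vec (W x)) c \<le> \<delta>" by (auto simp: dist_commute)
    then show ?thesis unfolding cen_def by (rule someI_ex)
  qed
  have uM: "\<forall>i<n. u j i \<in> space M" if "j < N" for j using code that unfolding DI_code_def by auto
  define quant where "quant j = restrict (\<lambda>i. cen (u j i)) {..<n}" for j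
  have inj: "inj_on quant {..<N}"
  proof (rule inj_onI, rule ccontr)
    fix j k assume j: "j \<in> {..<N}" and k: "k \<in> {..<N}" and eq: "quant j = quant k" and ne: "j \<noteq> k"
    have "\<forall>i<n. dist (sqrt_vec (W (u j i))) (sqrt_vec (W (u k i))) \<le> 2 * \<delta>"
    proof (intro allI impI)
      fix i assume i: "i < n"
      have "cen (u j i) = cen (u k i)" using fun_cong[OF eq, of i] i by (simp add: quant_def)
      then have "dist (sqrt_vec (W (u j i))) (sqrt_vec (W (u k i)))
          \<le> dist (sqrt_vec (W (u j i))) (cen (u j i)) + dist (sqrt_vec (W (u k i))) (cen (u k i))"
        by (metis dist_commute dist_triangle)
      also have "\<dots> \<le> 2 * \<delta>" using cen[of "u j i"] cen[of "u k i"] uM j k i by auto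
      finally show "dist (sqrt_vec (W (u j i))) (sqrt_vec (W (u k i))) \<le> 2 * \<delta>" .
    qed
    then have "prodW W n (u j) (E j) - prodW W n (u k) (E j) \<le> 4 * \<delta> * sqrt n"
      using code j k uM n \<delta> unfolding DI_code_def by (intro prodW_diff_le_of_close[OF ch]) auto
    moreover have "prodW W n (u j) (E j) \<ge> 1 - l1" "prodW W n (u k) (E j) \<le> l2"
      using code j k ne unfolding DI_code_def by auto
    ultimately show False using small by linarith
  qed
  have "quant j \<in> PiE {..<n} (\<lambda>_. C)" if "j < N" for j
    unfolding quant_def by (rule restrict_PiE_iff[THEN iffD2]) (use cen uM that in auto)
  then have "quant ` {..<N} \<subseteq> PiE {..<n} (\<lambda>_. C)" by auto
  then have "card {..<N} \<le> card (PiE {..<n} (\<lambda>_. C))"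
    using C(1) card_image[OF inj] by (metis card_mono finite_PiE finite_lessThan)
  then show ?thesis using C(1,2) by (simp add: card_PiE)
qed

lemma DI_code_le_N_DI: "DI_code M W n N l1 l2 u E \<Longrightarrow> ereal (real N) \<le> N_DI M W n l1 l2"
  unfolding N_DI_def by (rule SUP_upper) auto

lemma N_DI_le: "(\<And>N u E. DI_code M W n N l1 l2 u E \<Longrightarrow> real N \<le> B) \<Longrightarrow> N_DI M W n l1 l2 \<le> ereal B"
  unfolding N_DI_def by (rule SUP_least) auto

lemma DI_code_single:
  assumes "channel M W" "x \<in> space M" "0 \<le> l1"
  shows "DI_code M W n 1 l1 l2 (\<lambda>j i. x) (\<lambda>j. words n)"
  using assms sum_word_pmf[OF assms(1), of n "\<lambda>i. x"] by (simp add: DI_code_def prodW_eq_sum)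

lemma DI_rate_eq_ln:
  "N_DI M W n l1 l2 = ereal r \<Longrightarrow> DI_rate M W l1 l2 n = ereal (ln r / (real n * ln (real n)))"
  unfolding DI_rate_def by (simp add: log_def field_simps)

lemma DI_rate_le_of_card_bound:
  assumes ch: "channel M W" and ne: "space M \<noteq> {}" and l1: "0 \<le> l1" and n: "n \<ge> 2"
    and K: "(K::nat) \<ge> 1" and bound: "\<And>N u E. DI_code M W n N l1 l2 u E \<Longrightarrow> N \<le> K ^ n"
  shows "DI_rate M W l1 l2 n \<le> ereal (ln (real K) / ln n)"
proof -
  obtain x where x: "x \<in> space M" using ne by auto
  have le: "N_DI M W n l1 l2 \<le> ereal (real (K ^ n))" by (rule N_DI_le) (use bound in auto)
  have ge: "1 \<le> N_DI M W n l1 l2"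
    using DI_code_le_N_DI[OF DI_code_single[OF ch x l1]] by (simp add: one_ereal_def)
  obtain r where r: "N_DI M W n l1 l2 = ereal r" "1 \<le> r" "r \<le> real K ^ n"
    using le ge by (cases "N_DI M W n l1 l2") auto
  have "ln r \<le> ln (real K ^ n)" using r by (intro ln_mono) auto
  also have "\<dots> = n * ln (real K)" using K by (simp add: ln_realpow)
  finally have "ln r / (real n * ln (real n)) \<le> n * ln (real K) / (real n * ln (real n))"
    using n by (intro divide_right_mono) auto
  then show ?thesis using DI_rate_eq_ln[OF r(1)] n by simp
qed

lemma DI_rate_ge_of_DI_code:
  assumes code: "DI_code M W n N l1 l2 u E" and n: "n \<ge> 2" and N: "N \<ge> 1"
  shows "ereal (ln N / (real n * ln n)) \<le> DI_rate M W l1 l2 n"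
proof (cases "N_DI M W n l1 l2")
  case (real r)
  then have "ln N \<le> ln r" using DI_code_le_N_DI[OF code] N by simp
  then have "ln N / (real n * ln n) \<le> ln r / (real n * ln n)"
    using n by (intro divide_right_mono) auto
  then show ?thesis using DI_rate_eq_ln[OF real] by simp
next
  case PInf
  then show ?thesis unfolding DI_rate_def by simp
next
  case MInf
  then show ?thesis using DI_code_le_N_DI[OF code] by simp
qed

lemma DI_rate_nonneg:
  assumes "channel M W" "space M \<noteq> {}" "0 \<le> l1" "n \<ge> 2"
  shows "0 \<le> DI_rate M W l1 l2 n"
proof -
  obtain x where "x \<in> space M" using assms(2) by auto
  from DI_rate_ge_of_DI_code[OF DI_code_single[OF assms(1) this assms(3)] assms(4)]
  show ?thesis by (simp add: zero_ereal_def)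
qed

lemma DI_rate_le_ln_cover_num:
  assumes ch: "channel M W" and ne: "space M \<noteq> {}" and l1: "0 \<le> l1" and n: "n \<ge> 2"
    and \<delta>: "\<delta> > 0" "2 * \<delta>\<^sup>2 \<le> 1" and small: "4 * \<delta> * sqrt n < 1 - l1 - l2"
  shows "DI_rate M W l1 l2 n \<le> ereal (ln (real (cover_num (sqrt_X M W) \<delta>)) / ln n)"
proof (rule DI_rate_le_of_card_bound[OF ch ne l1 n])
  show "1 \<le> cover_num (sqrt_X M W) \<delta>"
    using ne by (intro cover_num_pos bounded_sqrt_X ch \<delta>) (auto simp: sqrt_X_def)
  show "N \<le> cover_num (sqrt_X M W) \<delta> ^ n" if "DI_code M W n N l1 l2 u E" for N u E
    using n \<delta> small that by (intro DI_code_card_le_cover_num_power[OF ch]) auto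
qed

lemma exists_scale_ln_cover_num_lt:
  assumes D: "lower_minkowski_dim F < ereal b" and \<epsilon>: "\<epsilon> > 0"
  shows "\<exists>\<delta>. 0 < \<delta> \<and> \<delta> < \<epsilon> \<and> \<delta> < 1 \<and> ln (real (cover_num F \<delta>)) < b * - ln \<delta>"
proof -
  have "\<not> eventually (\<lambda>d. ereal b \<le> ereal (log 2 (real (cover_num F d)) / - log 2 d)) (at_right 0)"
  proof
    assume "eventually (\<lambda>d. ereal b \<le> ereal (log 2 (real (cover_num F d)) / - log 2 d)) (at_right 0)"
    then have "ereal b \<le> lower_minkowski_dim F" unfolding lower_minkowski_dim_def by (rule Liminf_bounded)
    then show False using D by simp
  qed
  then have "\<not> (\<forall>d>0. d < min \<epsilon> 1 \<longrightarrow> ereal b \<le> ereal (log 2 (real (cover_num F d)) / - log 2 d))"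
    using \<epsilon> unfolding eventually_at_right_field by (metis min_less_iff_conj zero_less_one)
  then obtain \<delta> where \<delta>: "0 < \<delta>" "\<delta> < min \<epsilon> 1"
      "log 2 (real (cover_num F \<delta>)) / - log 2 \<delta> < b"
    by (auto simp: not_le)
  then have "ln (real (cover_num F \<delta>)) / - ln \<delta> < b" by (metis log2_div_neg_log2)
  moreover have "0 < - ln \<delta>" using \<delta> by simp
  ultimately have "ln (real (cover_num F \<delta>)) < b * - ln \<delta>" by (simp only: pos_divide_less_eq)
  then show ?thesis using \<delta> by auto
qed

text \<open>Along the scales \<delta> where the covering number is small, the block length
  n = floor(c/\<delta>^2) with c = (1 - l1 - l2)^2/64 satisfies the hypothesis of the converse
  at scale sqrt(c/n) \<ge> \<delta>.\<close>
lemma frequently_DI_rate_le: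
  fixes W :: "'x \<Rightarrow> 'y::finite \<Rightarrow> real"
  assumes ch: "channel M W" and ne: "space M \<noteq> {}" and l: "0 < l1" "0 < l2" "l1 + l2 < 1"
    and b: "b > 0" and e: "e > 0" and D: "lower_minkowski_dim (sqrt_X M W) < ereal b"
  shows "frequently (\<lambda>n. DI_rate M W l1 l2 n \<le> ereal (b * (1 + e) / 2)) sequentially"
  unfolding frequently_sequentially
proof
  fix N0
  define c where "c = (1 - l1 - l2)\<^sup>2 / 64"
  let ?G = "cover_num (sqrt_X M W)"
  have c: "c > 0" "c \<le> 1/64" using l by (auto simp: c_def power_le_one)
  obtain K1 where K1: "\<And>n. n \<ge> K1 \<Longrightarrow> ln ((real n + 1) / c) \<le> (1 + e) * ln (real n)"
    using eventually_ln_div_le[OF c(1) e] unfolding eventually_sequentially by blast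
  define Nb where "Nb = max N0 (max 2 K1)"
  obtain \<delta> where \<delta>: "0 < \<delta>" "\<delta> < sqrt (c / (real Nb + 1))" "\<delta> < 1"
      and G\<delta>: "ln (real (?G \<delta>)) < b * - ln \<delta>"
    using exists_scale_ln_cover_num_lt[OF D, of "sqrt (c / (real Nb + 1))"] c by auto
  have "\<delta>\<^sup>2 < c / (real Nb + 1)"
    using \<delta> c real_sqrt_less_iff[of "\<delta>\<^sup>2"] by (simp add: real_less_rsqrt)
  then have Nb_lt: "real Nb + 1 < c / \<delta>\<^sup>2" using \<delta> c by (simp add: field_simps)
  define n where "n = nat \<lfloor>c / \<delta>\<^sup>2\<rfloor>"
  have n: "real n \<le> c / \<delta>\<^sup>2" "c / \<delta>\<^sup>2 < real n + 1"
    using Nb_lt unfolding n_def by (auto simp: of_nat_nat)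
  then have "n \<ge> Nb" using Nb_lt by linarith
  then have n2: "n \<ge> 2" "n \<ge> N0" "n \<ge> K1" by (auto simp: Nb_def)
  define \<delta>n where "\<delta>n = sqrt (c / real n)"
  have \<delta>n: "\<delta>n > 0" "\<delta> \<le> \<delta>n" "2 * \<delta>n\<^sup>2 \<le> 1" "4 * \<delta>n * sqrt n < 1 - l1 - l2"
  proof -
    show "\<delta>n > 0" using c n2 by (simp add: \<delta>n_def)
    have "\<delta>\<^sup>2 \<le> c / real n" using n \<delta>(1) n2 by (simp add: field_simps)
    then show "\<delta> \<le> \<delta>n" unfolding \<delta>n_def using \<delta>(1) by (simp add: real_le_rsqrt)
    show "2 * \<delta>n\<^sup>2 \<le> 1" using c n2 by (simp add: \<delta>n_def field_simps)
    have "4 * \<delta>n * sqrt n = 4 * sqrt c" using n2 c by (simp add: \<delta>n_def real_sqrt_divide)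
    also have "\<dots> = (1 - l1 - l2) / 2" using l by (simp add: c_def real_sqrt_divide)
    finally show "4 * \<delta>n * sqrt n < 1 - l1 - l2" using l by simp
  qed
  have lnn: "ln (real n) > 0" using n2 by simp
  have "1 \<le> ?G \<delta>n"
    using ne by (intro cover_num_pos bounded_sqrt_X ch \<delta>n(1)) (auto simp: sqrt_X_def)
  moreover have "?G \<delta>n \<le> ?G \<delta>" by (rule cover_num_antimono[OF bounded_sqrt_X[OF ch] \<delta>(1) \<delta>n(2)])
  ultimately have "ln (real (?G \<delta>n)) \<le> ln (real (?G \<delta>))" by simp
  also have "\<dots> < b * - ln \<delta>" by (rule G\<delta>)
  also have "\<dots> \<le> b * ((1 + e) * ln n / 2)"
  proof -
    have "1 / \<delta>\<^sup>2 < (real n + 1) / c" using n c \<delta>(1) by (simp add: field_simps)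
    then have "ln (1 / \<delta>\<^sup>2) < ln ((real n + 1) / c)" using \<delta>(1) c by simp
    moreover have "ln (1 / \<delta>\<^sup>2) = - 2 * ln \<delta>" using \<delta>(1) by (simp add: ln_div ln_realpow)
    ultimately show ?thesis using K1[OF n2(3)] b by (intro mult_left_mono) auto
  qed
  finally have "ln (real (?G \<delta>n)) / ln n \<le> b * (1 + e) / 2" using lnn by (simp add: divide_le_eq)
  moreover have "DI_rate M W l1 l2 n \<le> ereal (ln (real (?G \<delta>n)) / ln n)"
    using l by (intro DI_rate_le_ln_cover_num[OF ch ne _ n2(1) \<delta>n(1,3,4)]) simp
  ultimately have "DI_rate M W l1 l2 n \<le> ereal (b * (1 + e) / 2)" by (simp add: order_trans)
  then show "\<exists>n\<ge>N0. DI_rate M W l1 l2 n \<le> ereal (b * (1 + e) / 2)" using n2(2) by blast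
qed

lemma liminf_DI_rate_le_half_dim:
  fixes W :: "'x \<Rightarrow> 'y::finite \<Rightarrow> real"
  assumes ch: "channel M W" and ne: "space M \<noteq> {}" and l: "0 < l1" "0 < l2" "l1 + l2 < 1"
  shows "liminf (DI_rate M W l1 l2) \<le> ereal (1/2) * lower_minkowski_dim (sqrt_X M W)"
proof -
  let ?D = "lower_minkowski_dim (sqrt_X M W)"
  have D0: "0 \<le> ?D"
    using ne by (intro lower_minkowski_dim_nonneg bounded_sqrt_X ch) (auto simp: sqrt_X_def)
  show ?thesis
  proof (cases ?D)
    case (real d)
    have "liminf (DI_rate M W l1 l2) \<le> ereal (d/2) + ereal e" if e: "0 < e" for e
    proof -
      have "liminf (DI_rate M W l1 l2) \<le> ereal ((d + e) * (1 + e / (d + e)) / 2)"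
        using real D0 e by (intro Liminf_le_of_frequently frequently_DI_rate_le[OF ch ne l]) auto
      also have "(d + e) * (1 + e / (d + e)) / 2 = d/2 + e" using real D0 e by (simp add: field_simps)
      finally show ?thesis by simp
    qed
    then show ?thesis using real by (simp add: ereal_le_epsilon2)
  qed (use D0 in auto)
qed

section \<open>Gilbert-Varshamov codes\<close>

definition hamming_dist :: "nat \<Rightarrow> (nat \<Rightarrow> 'a) \<Rightarrow> (nat \<Rightarrow> 'a) \<Rightarrow> nat" where
  "hamming_dist n u v = card {i. i < n \<and> u i \<noteq> v i}"

lemma hamming_dist_commute: "hamming_dist n u v = hamming_dist n v u"
  unfolding hamming_dist_def by (metis (mono_tags) eq_commute)

text \<open>Each word of the ball is determined by its set S of disagreement positions together with
  its letters on S.\<close>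
lemma card_hamming_ball_le:
  assumes L: "finite L" "card L \<ge> 1"
  shows "card {v \<in> PiE {..<n} (\<lambda>_. L). hamming_dist n c v < D} \<le> 2 ^ n * card L ^ D"
proof -
  let ?B = "{v \<in> PiE {..<n} (\<lambda>_. L). hamming_dist n c v < D}"
  let ?T = "\<lambda>S. {v \<in> PiE {..<n} (\<lambda>_. L). \<forall>i\<in>{..<n} - S. v i = c i}"
  let ?Ss = "{S. S \<subseteq> {..<n} \<and> card S < D}"
  have sub: "?B \<subseteq> (\<Union>S\<in>?Ss. ?T S)"
  proof
    fix v assume v: "v \<in> ?B"
    then have "{i. i < n \<and> c i \<noteq> v i} \<in> ?Ss" by (auto simp: hamming_dist_def)
    moreover have "v \<in> ?T {i. i < n \<and> c i \<noteq> v i}" using v by auto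
    ultimately show "v \<in> (\<Union>S\<in>?Ss. ?T S)" by blast
  qed
  have T: "card (?T S) \<le> card L ^ D" if S: "S \<in> ?Ss" for S
  proof -
    have finS: "finite S" using S finite_subset[of S "{..<n}"] by auto
    have inj: "inj_on (\<lambda>v. restrict v S) (?T S)"
    proof (rule inj_onI, rule ext)
      fix v1 v2 i assume v: "v1 \<in> ?T S" "v2 \<in> ?T S" and eq: "restrict v1 S = restrict v2 S"
      show "v1 i = v2 i"
      proof (cases "i \<in> S")
        case True
        then show ?thesis using fun_cong[OF eq, of i] by simp
      next
        case False
        then show ?thesis using v by (cases "i < n") (auto simp: PiE_def extensional_def)
      qed
    qed
    have "(\<lambda>v. restrict v S) ` (?T S) \<subseteq> PiE S (\<lambda>_. L)" using S by (auto simp: PiE_iff)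
    then have "card ((\<lambda>v. restrict v S) ` (?T S)) \<le> card (PiE S (\<lambda>_. L))"
      using L finS by (intro card_mono finite_PiE) auto
    also have "\<dots> = card L ^ card S" using finS by (simp add: card_PiE)
    also have "\<dots> \<le> card L ^ D" using L S by (intro power_increasing) auto
    finally show ?thesis using card_image[OF inj] by simp
  qed
  have "card ?B \<le> card (\<Union>S\<in>?Ss. ?T S)"
    using sub L by (intro card_mono) (auto intro!: finite_PiE)
  also have "\<dots> \<le> (\<Sum>S\<in>?Ss. card (?T S))" by (rule card_UN_le) auto
  also have "\<dots> \<le> card ?Ss * card L ^ D" using T sum_mono[of ?Ss _ "\<lambda>_. card L ^ D"] by simp
  also have "\<dots> \<le> card (Pow {..<n::nat}) * card L ^ D" by (intro mult_right_mono card_mono) auto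
  finally show ?thesis by (simp add: card_Pow)
qed

lemma gilbert_varshamov:
  assumes L: "finite L" "card L \<ge> 1" and D: "D \<ge> 1"
    and k: "k * (2 ^ n * card L ^ D) \<le> card L ^ n"
  shows "\<exists>C \<subseteq> PiE {..<n} (\<lambda>_. L). card C = k \<and> (\<forall>u\<in>C. \<forall>v\<in>C. u \<noteq> v \<longrightarrow> D \<le> hamming_dist n u v)"
  using k
proof (induction k)
  case 0
  show ?case by (intro exI[of _ "{}"]) auto
next
  case (Suc k)
  let ?P = "PiE {..<n} (\<lambda>_. L)"
  let ?B = "\<lambda>c. {v \<in> ?P. hamming_dist n c v < D}"
  obtain C where C: "C \<subseteq> ?P" "card C = k" "\<forall>u\<in>C. \<forall>v\<in>C. u \<noteq> v \<longrightarrow> D \<le> hamming_dist n u v"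
    using Suc by auto
  have finP: "finite ?P" using L by (intro finite_PiE) auto
  have "card (\<Union>c\<in>C. ?B c) \<le> (\<Sum>c\<in>C. card (?B c))"
    using finite_subset[OF C(1) finP] by (rule card_UN_le)
  also have "\<dots> \<le> k * (2 ^ n * card L ^ D)"
    using card_hamming_ball_le[OF L] C(2) sum_mono[of C _ "\<lambda>_. 2 ^ n * card L ^ D"] by simp
  also have "\<dots> < card L ^ n"
  proof -
    have "0 < 2 ^ n * card L ^ D" using L by simp
    then show ?thesis using Suc.prems by (simp only: mult_Suc)
  qed
  also have "\<dots> = card ?P" using L by (simp add: card_PiE)
  finally have "card (\<Union>c\<in>C. ?B c) < card ?P" .
  moreover have "finite (\<Union>c\<in>C. ?B c)" by (rule finite_subset[OF _ finP]) auto
  ultimately have "\<not> ?P \<subseteq> (\<Union>c\<in>C. ?B c)" by (meson card_mono not_le)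
  then obtain v where v: "v \<in> ?P" "\<forall>c\<in>C. D \<le> hamming_dist n c v" by (force simp: not_less)
  have "v \<notin> C"
  proof
    assume "v \<in> C"
    then have "D \<le> hamming_dist n v v" using v(2) by blast
    then show False using D by (simp add: hamming_dist_def)
  qed
  then show ?case
    using C v finite_subset[OF C(1) finP] by (intro exI[of _ "insert v C"]) (auto simp: hamming_dist_commute)
qed

text \<open>Pigeonhole over the floor(A/w) + 1 windows of width w covering [0, A].\<close>
lemma exists_subset_oscillation_lt:
  fixes f :: "'a \<Rightarrow> real"
  assumes C: "finite C" and w: "w > 0" and f: "\<And>u. u \<in> C \<Longrightarrow> 0 \<le> f u \<and> f u \<le> A"
  shows "\<exists>C' \<subseteq> C. card C \<le> (nat \<lfloor>A / w\<rfloor> + 1) * card C' \<and> (\<forall>u\<in>C'. \<forall>v\<in>C'. \<bar>f u - f v\<bar> < w)"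
proof -
  define Wn where "Wn = nat \<lfloor>A / w\<rfloor> + 1"
  define idx where "idx u = nat \<lfloor>f u / w\<rfloor>" for u
  define cl where "cl j = {u \<in> C. idx u = j}" for j
  have "idx u < Wn" if "u \<in> C" for u
  proof -
    have "\<lfloor>f u / w\<rfloor> \<le> \<lfloor>A / w\<rfloor>" using f[OF that] w by (intro floor_mono divide_right_mono) auto
    then show ?thesis unfolding idx_def Wn_def by linarith
  qed
  then have "C = (\<Union>j\<in>{..<Wn}. cl j)" unfolding cl_def by auto
  then have "card C \<le> (\<Sum>j\<in>{..<Wn}. card (cl j))" by (metis card_UN_le finite_lessThan)
  moreover obtain j0 where "\<forall>j\<in>{..<Wn}. card (cl j) \<le> card (cl j0)"
  proof -
    have "Max ((\<lambda>j. card (cl j)) ` {..<Wn}) \<in> (\<lambda>j. card (cl j)) ` {..<Wn}"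
      unfolding Wn_def by (intro Max_in) auto
    then obtain j0 where "card (cl j0) = Max ((\<lambda>j. card (cl j)) ` {..<Wn})" by auto
    then show ?thesis using that by (metis Max_ge finite_imageI finite_lessThan imageI)
  qed
  ultimately have "card C \<le> Wn * card (cl j0)"
    using sum_mono[of "{..<Wn}" "\<lambda>j. card (cl j)" "\<lambda>j. card (cl j0)"] by auto
  moreover have "\<bar>f u - f v\<bar> < w" if "u \<in> cl j0" "v \<in> cl j0" for u v
  proof -
    have "0 \<le> \<lfloor>f u / w\<rfloor>" "0 \<le> \<lfloor>f v / w\<rfloor>" using that f w unfolding cl_def by auto
    moreover have "nat \<lfloor>f u / w\<rfloor> = nat \<lfloor>f v / w\<rfloor>" using that unfolding cl_def idx_def by auto
    ultimately have "\<lfloor>f u / w\<rfloor> = \<lfloor>f v / w\<rfloor>" by (simp add: eq_nat_nat_iff)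
    then have "\<bar>f u / w - f v / w\<bar> < 1" by linarith
    then show ?thesis using w by (simp add: diff_divide_distrib[symmetric])
  qed
  moreover have "cl j0 \<subseteq> C" unfolding cl_def by auto
  ultimately show ?thesis unfolding Wn_def by blast
qed

section \<open>Typical-set decoding\<close>

definition entropy :: "('y::finite \<Rightarrow> real) \<Rightarrow> real" where
  "entropy p = - (\<Sum>a\<in>UNIV. p a * ln (p a))"

definition word_entropy :: "('x \<Rightarrow> 'y::finite \<Rightarrow> real) \<Rightarrow> nat \<Rightarrow> (nat \<Rightarrow> 'x) \<Rightarrow> real" where
  "word_entropy W n u = (\<Sum>i<n. entropy (W (u i)))"

definition typical_set :: "('x \<Rightarrow> 'y::finite \<Rightarrow> real) \<Rightarrow> nat \<Rightarrow> real \<Rightarrow> (nat \<Rightarrow> 'x) \<Rightarrow> (nat \<Rightarrow> 'y) set" where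
  "typical_set W n \<tau> u = {y \<in> words n. (\<forall>i<n. 0 < W (u i) (y i)) \<and>
     - word_entropy W n u - \<tau> \<le> (\<Sum>i<n. ln (W (u i) (y i)))}"

lemma entropy_bounds:
  fixes W :: "'x \<Rightarrow> 'y::finite \<Rightarrow> real"
  assumes ch: "channel M W" and x: "x \<in> space M"
  shows "0 \<le> entropy (W x)" "entropy (W x) \<le> real CARD('y)"
proof -
  have t: "0 \<le> - (W x a * ln (W x a))" "- (W x a * ln (W x a)) \<le> 1" for a
  proof -
    have p: "0 \<le> W x a" "W x a \<le> 1" using channelD[OF ch x] by auto
    show "- (W x a * ln (W x a)) \<le> 1" using neg_mult_ln_le_1[OF p(1)] .
    show "0 \<le> - (W x a * ln (W x a))"
      using p by (cases "W x a = 0") (auto simp: mult_nonneg_nonpos)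
  qed
  have "entropy (W x) = (\<Sum>a\<in>UNIV. - (W x a * ln (W x a)))" unfolding entropy_def by (simp add: sum_negf)
  then show "0 \<le> entropy (W x)" "entropy (W x) \<le> real CARD('y)"
    using sum_nonneg[of UNIV "\<lambda>a. - (W x a * ln (W x a))"]
      sum_mono[of UNIV "\<lambda>a. - (W x a * ln (W x a))" "\<lambda>_. 1"] t by auto
qed

lemma word_entropy_bounds:
  fixes W :: "'x \<Rightarrow> 'y::finite \<Rightarrow> real"
  assumes "channel M W" "\<forall>i<n. u i \<in> space M"
  shows "0 \<le> word_entropy W n u" "word_entropy W n u \<le> real n * real CARD('y)"
proof -
  have H: "0 \<le> entropy (W (u i))" "entropy (W (u i)) \<le> real CARD('y)" if "i < n" for i
    using assms(2) that entropy_bounds[OF assms(1)] by auto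
  then show "0 \<le> word_entropy W n u" unfolding word_entropy_def by (intro sum_nonneg) auto
  have "word_entropy W n u \<le> (\<Sum>i<n. real CARD('y))"
    unfolding word_entropy_def using H by (intro sum_mono) auto
  then show "word_entropy W n u \<le> real n * real CARD('y)" by simp
qed

text \<open>The second-moment bound rests on p (ln p)^2 \<le> 4 on [0, 1].\<close>
lemma info_density_moments:
  fixes W :: "'x \<Rightarrow> 'y::finite \<Rightarrow> real"
  assumes ch: "channel M W" and x: "x \<in> space M"
  shows "(\<Sum>a\<in>UNIV. W x a * (ln (W x a) + entropy (W x))) = 0"
    "(\<Sum>a\<in>UNIV. W x a * (ln (W x a) + entropy (W x))\<^sup>2) \<le> 4 * real CARD('y)"
proof -
  have s1: "sum (W x) UNIV = 1" using channelD[OF ch x] by auto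
  have "(\<Sum>a\<in>UNIV. W x a * (ln (W x a) + entropy (W x)))
      = (\<Sum>a\<in>UNIV. W x a * ln (W x a)) + (\<Sum>a\<in>UNIV. W x a) * entropy (W x)"
    by (simp add: distrib_left sum.distrib sum_distrib_right)
  then show "(\<Sum>a\<in>UNIV. W x a * (ln (W x a) + entropy (W x))) = 0"
    using s1 by (simp add: entropy_def)
  have "(\<Sum>a\<in>UNIV. W x a * (ln (W x a) + entropy (W x))\<^sup>2)
      = (\<Sum>a\<in>UNIV. W x a * (ln (W x a))\<^sup>2) + 2 * entropy (W x) * (\<Sum>a\<in>UNIV. W x a * ln (W x a))
        + (entropy (W x))\<^sup>2 * sum (W x) UNIV"
    by (simp add: power2_eq_square algebra_simps sum.distrib sum_distrib_left sum_distrib_right)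
  also have "\<dots> = (\<Sum>a\<in>UNIV. W x a * (ln (W x a))\<^sup>2) - (entropy (W x))\<^sup>2"
    using s1 by (simp add: entropy_def power2_eq_square)
  also have "\<dots> \<le> (\<Sum>a\<in>(UNIV::'y set). 4)"
  proof -
    have "W x a * (ln (W x a))\<^sup>2 \<le> 4" for a
    proof -
      have "0 \<le> W x a" "W x a \<le> 1" using channelD[OF ch x] by auto
      then show ?thesis using mult_ln_power2_le_4[of "W x a"] by (cases "W x a = 0") simp_all
    qed
    then have "(\<Sum>a\<in>UNIV. W x a * (ln (W x a))\<^sup>2) \<le> (\<Sum>a\<in>(UNIV::'y set). 4)" by (intro sum_mono)
    then show ?thesis using zero_le_power2[of "entropy (W x)"] by linarith
  qed
  finally show "(\<Sum>a\<in>UNIV. W x a * (ln (W x a) + entropy (W x))\<^sup>2) \<le> 4 * real CARD('y)" by simp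
qed

lemma info_density_deviation_prob_le:
  fixes W :: "'x \<Rightarrow> 'y::finite \<Rightarrow> real"
  assumes ch: "channel M W" and u: "\<forall>i<n. u i \<in> space M" and \<tau>: "\<tau> > 0"
  shows "(\<Sum>y\<in>{y\<in>words n. \<tau> \<le> \<bar>\<Sum>i<n. ln (W (u i) (y i)) + entropy (W (u i))\<bar>}. word_pmf W n u y)
     \<le> 4 * real CARD('y) * n / \<tau>\<^sup>2"
proof -
  let ?g = "\<lambda>i a. ln (W (u i) a) + entropy (W (u i))"
  have "(\<Sum>y\<in>{y\<in>words n. \<tau> \<le> \<bar>\<Sum>i<n. ?g i (y i)\<bar>}. word_pmf W n u y)
      \<le> (\<Sum>y\<in>words n. word_pmf W n u y * (\<Sum>i<n. ?g i (y i))\<^sup>2) / \<tau>\<^sup>2"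
    using word_pmf_nonneg[OF ch u] \<tau> by (intro chebyshev_sum) auto
  also have "(\<Sum>y\<in>words n. word_pmf W n u y * (\<Sum>i<n. ?g i (y i))\<^sup>2)
      = (\<Sum>i<n. \<Sum>a\<in>UNIV. W (u i) a * (?g i a)\<^sup>2)"
    using u info_density_moments(1)[OF ch] channelD[OF ch] by (intro variance_sum_words) auto
  also have "\<dots> \<le> (\<Sum>i<n. 4 * real CARD('y))"
    using u info_density_moments(2)[OF ch] by (intro sum_mono) auto
  finally show ?thesis using \<tau> by (simp add: divide_right_mono mult.commute)
qed

lemma prodW_typical_set_ge:
  fixes W :: "'x \<Rightarrow> 'y::finite \<Rightarrow> real"
  assumes ch: "channel M W" and u: "\<forall>i<n. u i \<in> space M" and \<tau>: "\<tau> > 0"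
  shows "1 - 4 * real CARD('y) * n / \<tau>\<^sup>2 \<le> prodW W n u (typical_set W n \<tau> u)"
proof -
  let ?g = "\<lambda>i a. ln (W (u i) a) + entropy (W (u i))"
  let ?E = "typical_set W n \<tau> u"
  let ?Dev = "{y\<in>words n. \<tau> \<le> \<bar>\<Sum>i<n. ?g i (y i)\<bar>}"
  have E: "?E \<subseteq> words n" unfolding typical_set_def by auto
  have "word_pmf W n u y = 0" if "y \<in> words n - ?E" "y \<notin> ?Dev" for y
  proof (rule ccontr)
    assume "word_pmf W n u y \<noteq> 0"
    then have "\<forall>i<n. 0 < W (u i) (y i)" by (rule word_pmf_pos_letters[OF ch u])
    then have "(\<Sum>i<n. ln (W (u i) (y i))) < - word_entropy W n u - \<tau>"
      using that(1) by (auto simp: typical_set_def not_le)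
    moreover have "\<bar>(\<Sum>i<n. ln (W (u i) (y i))) + word_entropy W n u\<bar> < \<tau>"
      using that by (simp add: sum.distrib word_entropy_def not_le)
    ultimately show False by linarith
  qed
  then have "(\<Sum>y\<in>words n - ?E. word_pmf W n u y) = (\<Sum>y\<in>(words n - ?E) \<inter> ?Dev. word_pmf W n u y)"
    by (intro sum.mono_neutral_right) auto
  also have "\<dots> \<le> (\<Sum>y\<in>?Dev. word_pmf W n u y)"
    using word_pmf_nonneg[OF ch u] by (intro sum_mono2) auto
  also have "\<dots> \<le> 4 * real CARD('y) * n / \<tau>\<^sup>2" by (rule info_density_deviation_prob_le[OF ch u \<tau>])
  finally have "(\<Sum>y\<in>words n - ?E. word_pmf W n u y) \<le> 4 * real CARD('y) * n / \<tau>\<^sup>2" .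
  moreover have "(\<Sum>y\<in>?E. word_pmf W n u y) + (\<Sum>y\<in>words n - ?E. word_pmf W n u y) = 1"
    using sum.subset_diff[OF E finite_words, of "word_pmf W n u"] sum_word_pmf[OF ch u] by linarith
  ultimately show ?thesis using prodW_eq_sum[OF E, of W u] by linarith
qed

lemma word_pmf_le_on_typical_set:
  fixes W :: "'x \<Rightarrow> 'y::finite \<Rightarrow> real"
  assumes ch: "channel M W" and v: "\<forall>i<n. v i \<in> space M"
    and y: "y \<in> typical_set W n \<tau> u" and w: "\<bar>word_entropy W n u - word_entropy W n v\<bar> < w"
    and dev: "\<bar>\<Sum>i<n. ln (W (v i) (y i)) + entropy (W (v i))\<bar> < \<tau>"
  shows "word_pmf W n v y \<le> exp (2 * \<tau> + w) * word_pmf W n u y"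
proof (cases "word_pmf W n v y = 0")
  case False
  have vpos: "\<forall>i<n. 0 < W (v i) (y i)" by (rule word_pmf_pos_letters[OF ch v False])
  have upos: "\<forall>i<n. 0 < W (u i) (y i)" and typical: "- word_entropy W n u - \<tau> \<le> (\<Sum>i<n. ln (W (u i) (y i)))"
    using y unfolding typical_set_def by auto
  have "ln (word_pmf W n v y) = (\<Sum>i<n. ln (W (v i) (y i)))" using vpos by (intro ln_prod) auto
  also have "\<dots> < (\<Sum>i<n. ln (W (u i) (y i))) + (2 * \<tau> + w)"
    using dev w typical by (simp add: sum.distrib word_entropy_def abs_less_iff)
  also have "(\<Sum>i<n. ln (W (u i) (y i))) = ln (word_pmf W n u y)" using upos by (intro ln_prod[symmetric]) auto
  finally have "exp (ln (word_pmf W n v y)) < exp (ln (word_pmf W n u y) + (2 * \<tau> + w))" by simp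
  moreover have "0 < word_pmf W n v y" "0 < word_pmf W n u y"
    using vpos upos by (auto intro: prod_pos)
  ultimately show ?thesis by (simp add: exp_add mult.commute)
next
  case True
  have "0 < word_pmf W n u y" using y unfolding typical_set_def by (auto intro: prod_pos)
  then have "0 \<le> exp (2 * \<tau> + w) * word_pmf W n u y" by simp
  then show ?thesis using True by linarith
qed


lemma bhattacharyya_words_le_exp:
  fixes W :: "'x \<Rightarrow> 'y::finite \<Rightarrow> real"
  assumes ch: "channel M W" and u: "\<forall>i<n. u i \<in> space M" and v: "\<forall>i<n. v i \<in> space M"
    and far: "\<forall>i<n. u i \<noteq> v i \<longrightarrow> \<delta> < dist (sqrt_vec (W (u i))) (sqrt_vec (W (v i)))"
    and \<delta>: "\<delta> > 0" and D: "D \<le> hamming_dist n u v"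
  shows "(\<Sum>y\<in>words n. sqrt (word_pmf W n u y * word_pmf W n v y)) \<le> exp (- (D * \<delta>\<^sup>2 / 2))"
proof -
  define dd where "dd i = (dist (sqrt_vec (W (u i))) (sqrt_vec (W (v i))))\<^sup>2" for i
  have B: "(\<Sum>a\<in>UNIV. sqrt (W (u i) a * W (v i) a)) = 1 - dd i / 2" if "i < n" for i
    unfolding dd_def using u v that by (intro bhattacharyya_letters[OF ch]) auto
  have "(\<Prod>i<n. \<Sum>a\<in>UNIV. sqrt (W (u i) a * W (v i) a)) \<le> (\<Prod>i<n. exp (- (dd i / 2)))"
  proof (rule prod_mono)
    fix i assume "i \<in> {..<n}"
    moreover have "0 \<le> (\<Sum>a\<in>UNIV. sqrt (W (u i) a * W (v i) a))"
      using u v \<open>i \<in> {..<n}\<close> by (intro sum_nonneg real_sqrt_ge_zero mult_nonneg_nonneg) (auto intro: channelD[OF ch])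
    ultimately show "0 \<le> (\<Sum>a\<in>UNIV. sqrt (W (u i) a * W (v i) a)) \<and>
        (\<Sum>a\<in>UNIV. sqrt (W (u i) a * W (v i) a)) \<le> exp (- (dd i / 2))"
      using B exp_ge_add_one_self[of "- (dd i / 2)"] by simp
  qed
  also have "\<dots> = exp (\<Sum>i<n. - (dd i / 2))" by (simp add: exp_sum)
  also have "\<dots> = exp (- (\<Sum>i<n. dd i) / 2)" by (simp add: sum_negf sum_divide_distrib)
  also have "\<dots> \<le> exp (- (D * \<delta>\<^sup>2 / 2))"
  proof -
    let ?S = "{i. i < n \<and> u i \<noteq> v i}"
    have "real D * \<delta>\<^sup>2 \<le> real (card ?S) * \<delta>\<^sup>2"
      using D by (intro mult_right_mono) (auto simp: hamming_dist_def)
    also have "\<dots> = (\<Sum>i\<in>?S. \<delta>\<^sup>2)" by simp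
    also have "\<dots> \<le> (\<Sum>i\<in>?S. dd i)"
    proof (rule sum_mono)
      fix i assume "i \<in> ?S"
      then have "\<delta> < dist (sqrt_vec (W (u i))) (sqrt_vec (W (v i)))" using far by auto
      then show "\<delta>\<^sup>2 \<le> dd i" unfolding dd_def using \<delta> by (intro power_mono) auto
    qed
    also have "\<dots> \<le> (\<Sum>i<n. dd i)" unfolding dd_def by (intro sum_mono2) auto
    finally show ?thesis by simp
  qed
  finally show ?thesis by (simp add: bhattacharyya_words)
qed

lemma prodW_typical_set_other_le:
  fixes W :: "'x \<Rightarrow> 'y::finite \<Rightarrow> real"
  assumes ch: "channel M W" and u: "\<forall>i<n. u i \<in> space M" and v: "\<forall>i<n. v i \<in> space M"
    and \<tau>: "\<tau> > 0" and w: "\<bar>word_entropy W n u - word_entropy W n v\<bar> < w"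
    and far: "\<forall>i<n. u i \<noteq> v i \<longrightarrow> \<delta> < dist (sqrt_vec (W (u i))) (sqrt_vec (W (v i)))"
    and \<delta>: "\<delta> > 0" and D: "D \<le> hamming_dist n u v"
  shows "prodW W n v (typical_set W n \<tau> u)
    \<le> exp (\<tau> + w / 2 - D * \<delta>\<^sup>2 / 2) + 4 * real CARD('y) * n / \<tau>\<^sup>2"
proof -
  let ?P = "word_pmf W n u" and ?Q = "word_pmf W n v"
  let ?E = "typical_set W n \<tau> u"
  define c where "c = exp (2 * \<tau> + w)"
  let ?Lr = "{y\<in>words n. ?Q y \<le> c * ?P y}"
  let ?Dev = "{y\<in>words n. \<tau> \<le> \<bar>\<Sum>i<n. ln (W (v i) (y i)) + entropy (W (v i))\<bar>}"
  have E: "?E \<subseteq> words n" unfolding typical_set_def by auto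
  have "?E \<subseteq> ?Lr \<union> ?Dev"
  proof
    fix y assume y: "y \<in> ?E"
    show "y \<in> ?Lr \<union> ?Dev"
    proof (cases "y \<in> ?Dev")
      case False
      then have "\<bar>\<Sum>i<n. ln (W (v i) (y i)) + entropy (W (v i))\<bar> < \<tau>" using y E by auto
      then have "?Q y \<le> c * ?P y" unfolding c_def by (rule word_pmf_le_on_typical_set[OF ch v y w])
      then show ?thesis using y E by auto
    qed simp
  qed
  then have "prodW W n v ?E \<le> sum ?Q (?Lr \<union> ?Dev)"
    using E word_pmf_nonneg[OF ch v] by (auto simp: prodW_eq_sum intro!: sum_mono2)
  also have "\<dots> \<le> sum ?Q ?Lr + sum ?Q ?Dev"
  proof -
    have "sum ?Q (?Lr \<union> ?Dev) + sum ?Q (?Lr \<inter> ?Dev) = sum ?Q ?Lr + sum ?Q ?Dev"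
      by (intro sum.union_inter) auto
    moreover have "0 \<le> sum ?Q (?Lr \<inter> ?Dev)" using word_pmf_nonneg[OF ch v] by (intro sum_nonneg) auto
    ultimately show ?thesis by linarith
  qed
  also have "\<dots> \<le> sqrt c * (\<Sum>y\<in>words n. sqrt (?P y * ?Q y)) + 4 * real CARD('y) * n / \<tau>\<^sup>2"
    using word_pmf_nonneg[OF ch u] word_pmf_nonneg[OF ch v]
    by (intro add_mono sum_likelihood_ratio_le_bhattacharyya info_density_deviation_prob_le[OF ch v \<tau>])
      (auto simp: c_def)
  also have "\<dots> \<le> sqrt c * exp (- (D * \<delta>\<^sup>2 / 2)) + 4 * real CARD('y) * n / \<tau>\<^sup>2"
    using bhattacharyya_words_le_exp[OF ch u v far \<delta> D] by (intro add_mono mult_left_mono) (auto simp: c_def)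
  also have "sqrt c * exp (- (D * \<delta>\<^sup>2 / 2)) = exp (\<tau> + w / 2 - D * \<delta>\<^sup>2 / 2)"
    by (simp add: c_def sqrt_exp exp_add[symmetric] exp_diff)
  finally show ?thesis .
qed

section \<open>The achievability bound\<close>

lemma exists_DI_code_of_separated_set:
  fixes W :: "'x \<Rightarrow> 'y::finite \<Rightarrow> real" and L :: "'x set"
  assumes ch: "channel M W" and L: "L \<subseteq> space M" "finite L" "card L \<ge> 1"
    and sep: "\<forall>a\<in>L. \<forall>b\<in>L. a \<noteq> b \<longrightarrow> \<delta> < dist (sqrt_vec (W a)) (sqrt_vec (W b))"
    and \<delta>: "\<delta> > 0" and \<tau>: "\<tau> > 0" and w: "w > 0" and D: "D \<ge> 1"
    and k: "k * (2 ^ n * card L ^ D) \<le> card L ^ n"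
    and err1: "4 * real CARD('y) * n / \<tau>\<^sup>2 \<le> l1"
    and err2: "exp (\<tau> + w / 2 - D * \<delta>\<^sup>2 / 2) + 4 * real CARD('y) * n / \<tau>\<^sup>2 \<le> l2"
  shows "\<exists>N u E. DI_code M W n N l1 l2 u E \<and> k \<le> (nat \<lfloor>real n * real CARD('y) / w\<rfloor> + 1) * N"
proof -
  obtain C where C: "C \<subseteq> PiE {..<n} (\<lambda>_. L)" "card C = k"
      "\<forall>u\<in>C. \<forall>v\<in>C. u \<noteq> v \<longrightarrow> D \<le> hamming_dist n u v"
    using gilbert_varshamov[OF L(2,3) D k] by blast
  have finC: "finite C" using C(1) L(2) by (meson finite_PiE finite_lessThan finite_subset)
  have letters: "\<forall>i<n. u i \<in> space M" if "u \<in> C" for u using C(1) L(1) that by (auto simp: PiE_iff)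
  obtain C' where C': "C' \<subseteq> C" "card C \<le> (nat \<lfloor>real n * real CARD('y) / w\<rfloor> + 1) * card C'"
      "\<forall>u\<in>C'. \<forall>v\<in>C'. \<bar>word_entropy W n u - word_entropy W n v\<bar> < w"
  proof (rule exists_subset_oscillation_lt[OF finC w, THEN exE])
    show "0 \<le> word_entropy W n u \<and> word_entropy W n u \<le> real n * real CARD('y)" if "u \<in> C" for u
      using word_entropy_bounds[OF ch letters[OF that]] by simp
  qed (use that in blast)
  obtain h where h: "bij_betw h {..<card C'} C'"
    using ex_bij_betw_nat_finite[OF finite_subset[OF C'(1) finC]] by (auto simp: atLeast0LessThan)
  then have hC: "h j \<in> C" and hC': "h j \<in> C'" if "j < card C'" for j
    using that C'(1) by (auto dest: bij_betw_apply)
  have "DI_code M W n (card C') l1 l2 h (\<lambda>j. typical_set W n \<tau> (h j))"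
    unfolding DI_code_def
  proof (intro conjI allI impI)
    fix j assume j: "j < card C'"
    show "\<And>i. i < n \<Longrightarrow> h j i \<in> space M" using letters[OF hC[OF j]] by auto
    show "typical_set W n \<tau> (h j) \<subseteq> words n" unfolding typical_set_def by auto
    show "1 - l1 \<le> prodW W n (h j) (typical_set W n \<tau> (h j))"
      using prodW_typical_set_ge[OF ch letters[OF hC[OF j]] \<tau>] err1 by linarith
  next
    fix j k assume j: "j < card C'" and k: "k < card C'" and jk: "j \<noteq> k"
    have ne: "h j \<noteq> h k" using h j k jk unfolding bij_betw_def inj_on_def by auto
    have "\<forall>i<n. h k i \<noteq> h j i \<longrightarrow> \<delta> < dist (sqrt_vec (W (h k i))) (sqrt_vec (W (h j i)))"
      using sep C(1) hC[OF j] hC[OF k] by (auto simp: PiE_iff)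
    moreover have "D \<le> hamming_dist n (h k) (h j)" using C(3) hC[OF j] hC[OF k] ne by auto
    moreover have "\<bar>word_entropy W n (h k) - word_entropy W n (h j)\<bar> < w" using C'(3) hC' j k by auto
    ultimately have "prodW W n (h j) (typical_set W n \<tau> (h k))
        \<le> exp (\<tau> + w / 2 - D * \<delta>\<^sup>2 / 2) + 4 * real CARD('y) * n / \<tau>\<^sup>2"
      by (intro prodW_typical_set_other_le[OF ch letters[OF hC[OF k]] letters[OF hC[OF j]] \<tau> _ _ \<delta>])
    then show "prodW W n (h j) (typical_set W n \<tau> (h k)) \<le> l2" using err2 by linarith
  qed
  moreover have "k \<le> (nat \<lfloor>real n * real CARD('y) / w\<rfloor> + 1) * card C'" using C(2) C'(2) by simp
  ultimately show ?thesis by blast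
qed

lemma exists_DI_code_ln_card_ge:
  fixes W :: "'x \<Rightarrow> 'y::finite \<Rightarrow> real" and L :: "'x set"
  assumes ch: "channel M W" and L: "L \<subseteq> space M" "finite L" "card L \<ge> 1"
    and sep: "\<forall>a\<in>L. \<forall>b\<in>L. a \<noteq> b \<longrightarrow> \<delta> < dist (sqrt_vec (W a)) (sqrt_vec (W b))"
    and \<delta>: "\<delta> > 0" and \<tau>: "\<tau> > 0" and n: "n > 0" and D: "1 \<le> D" "D \<le> n"
    and X: "4 \<le> real (card L) ^ (n - D) / 2 ^ n"
    and err1: "4 * real CARD('y) * n / \<tau>\<^sup>2 \<le> l1"
    and err2: "exp (\<tau> + sqrt n / 2 - D * \<delta>\<^sup>2 / 2) + 4 * real CARD('y) * n / \<tau>\<^sup>2 \<le> l2"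
  shows "\<exists>N u E. DI_code M W n N l1 l2 u E \<and> 1 \<le> N \<and>
    ln (real (card L) ^ (n - D) / 2 ^ n) - ln 2 \<le> ln (real CARD('y) * sqrt n + 1) + ln (real N)"
proof -
  define K where "K = card L"
  define X where "X = real K ^ (n - D) / 2 ^ n"
  define k where "k = K ^ (n - D) div 2 ^ n"
  define m where "m = real CARD('y)"
  have k: "k * (2 ^ n * card L ^ D) \<le> card L ^ n"
  proof -
    have "k * 2 ^ n * K ^ D \<le> K ^ (n - D) * K ^ D"
      unfolding k_def by (intro mult_right_mono div_times_less_eq_dividend) simp
    also have "\<dots> = K ^ n" using D(2) by (simp add: power_add[symmetric])
    finally show ?thesis by (simp add: K_def mult.assoc)
  qed
  obtain N u E where code: "DI_code M W n N l1 l2 u E"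
      and kN: "k \<le> (nat \<lfloor>real n * m / sqrt n\<rfloor> + 1) * N"
    using exists_DI_code_of_separated_set[OF ch L sep \<delta> \<tau> _ D(1) k err1 err2] n
    unfolding m_def by auto
  have kX: "X / 2 \<le> real k"
    using real_div_nat_ge[of "2 ^ n" "K ^ (n - D)"] X unfolding k_def X_def K_def by simp
  have "real n / sqrt n = sqrt n" using n by (intro real_div_sqrt) simp
  then have "real n * m / sqrt n = m * sqrt n" by (metis times_divide_eq_right mult.commute)
  then have "real (nat \<lfloor>real n * m / sqrt n\<rfloor> + 1) \<le> m * sqrt n + 1" by (simp add: m_def of_nat_nat)
  then have "real k \<le> (m * sqrt n + 1) * real N"
    using of_nat_mono[OF kN] by (smt (verit) mult_right_mono of_nat_0_le_iff of_nat_mult)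
  then have XN: "X / 2 \<le> (m * sqrt n + 1) * real N" using kX by linarith
  have X4: "4 \<le> X" using X by (simp add: X_def K_def)
  then have N: "N \<ge> 1" using XN by (cases N) auto
  have "ln X - ln 2 = ln (X / 2)" using X4 by (simp add: ln_div)
  also have "\<dots> \<le> ln ((m * sqrt n + 1) * real N)" using XN X4 by (intro ln_mono) auto
  also have "\<dots> = ln (m * sqrt n + 1) + ln (real N)"
    using N by (intro ln_mult_pos) (auto simp: m_def add_nonneg_pos)
  finally show ?thesis using code N unfolding X_def K_def m_def by blast
qed

lemma ln_power_div_power2_ge:
  fixes K D n :: nat and a d \<rho> :: real
  assumes K: "1 \<le> K" "d * ln n < ln K" and n: "n \<ge> 2"
    and D: "D \<le> n" "real D \<le> \<rho> * n + 1" and \<rho>: "\<rho> \<le> 1/4" and a: "a \<le> (1 - \<rho>) * d"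
  shows "a * n * ln n - d * ln n - n * ln 2 \<le> ln (real K ^ (n - D) / 2 ^ n)"
proof -
  have lnn: "0 \<le> ln (real n)" using n by simp
  have "\<rho> * n \<le> 1/4 * n" using \<rho> by (intro mult_right_mono) auto
  moreover have "(1 - \<rho>) * n - 1 = n - \<rho> * n - 1" by (simp add: algebra_simps)
  moreover have "real (n - D) = real n - real D" using D(1) by (simp add: of_nat_diff)
  moreover have "real n \<ge> 2" using n by simp
  ultimately have m: "(1 - \<rho>) * n - 1 \<le> real (n - D)" "0 \<le> (1 - \<rho>) * n - 1"
    using D(2) by linarith+
  have "a * n * ln n - d * ln n - n * ln 2 \<le> ((1 - \<rho>) * n - 1) * (d * ln n) - n * ln 2"
    using mult_right_mono[OF a, of "n * ln n"] lnn by (simp add: algebra_simps)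
  also have "\<dots> \<le> ((1 - \<rho>) * n - 1) * ln K - n * ln 2"
    using K m by (intro diff_right_mono mult_left_mono) auto
  also have "\<dots> \<le> real (n - D) * ln K - n * ln 2"
    using K m by (intro diff_right_mono mult_right_mono) auto
  also have "\<dots> = ln (real K ^ (n - D) / 2 ^ n)"
    using K by (simp add: ln_div ln_realpow)
  finally show ?thesis .
qed

text \<open>One block length of the achievability argument, with \<delta> = n^(-(1/4 - \<eta>)),
  decoding threshold \<tau> = n^(1/2 + \<eta>), entropy window \<surd>n and minimum distance \<rho>n.
  The conditions on n hold for all large n.\<close>
lemma DI_rate_gt_at_block_length:
  fixes W :: "'x \<Rightarrow> 'y::finite \<Rightarrow> real"
  assumes ch: "channel M W" and ne: "space M \<noteq> {}" and l2: "0 < l2" and n: "n \<ge> 2"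
    and \<rho>: "0 < \<rho>" "\<rho> \<le> 1/4" and \<eta>: "\<eta> < 1/4"
    and key: "t + s \<le> (1 - \<rho>) * d' * (1/4 - \<eta>)"
    and c1: "4 * real CARD('y) * n / (real n powr (1/2 + \<eta>))\<^sup>2 \<le> min l1 (l2 / 2)"
    and c2: "real n powr (1/2 + \<eta>) + sqrt n / 2 - \<rho> * real n powr (1/2 + 2 * \<eta>) / 2 \<le> ln (l2 / 2)"
    and c3: "d' < log 2 (real (cover_num (sqrt_X M W) (real n powr - (1/4 - \<eta>))))
        / - log 2 (real n powr - (1/4 - \<eta>))"
    and c4: "ln 4 \<le> (t + s) * n * ln n - d' * (1/4 - \<eta>) * ln n - n * ln 2"
    and c5: "0 < s * n * ln n - d' * (1/4 - \<eta>) * ln n - (n + 1) * ln 2 - ln (real CARD('y) * sqrt n + 1)"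
  shows "ereal t < DI_rate M W l1 l2 n"
proof -
  define \<alpha> where "\<alpha> = 1/4 - \<eta>"
  define \<delta> where "\<delta> = real n powr - \<alpha>"
  define \<tau> where "\<tau> = real n powr (1/2 + \<eta>)"
  define m where "m = real CARD('y)"
  define K where "K = cover_num (sqrt_X M W) \<delta>"
  define D where "D = nat \<lceil>\<rho> * n\<rceil>"
  define X where "X = real K ^ (n - D) / 2 ^ n"
  have n0: "real n \<ge> 2" and lnn: "ln (real n) > 0" using n by auto
  have \<alpha>: "\<alpha> > 0" using \<eta> by (simp add: \<alpha>_def)
  have \<delta>: "\<delta> > 0" "- ln \<delta> = \<alpha> * ln n" using n0 by (auto simp: \<delta>_def ln_powr)
  have K1: "K \<ge> 1"
    unfolding K_def using ne \<delta> by (intro cover_num_pos bounded_sqrt_X ch) (auto simp: sqrt_X_def)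
  have "ln (real K) / - ln \<delta> > d'" using c3 log2_div_neg_log2 unfolding K_def \<delta>_def \<alpha>_def by metis
  then have lnK: "d' * \<alpha> * ln n < ln (real K)" using \<delta> \<alpha> lnn by (simp add: pos_less_divide_eq mult.assoc)
  obtain L where L: "L \<subseteq> space M" "finite L" "card L = K"
     "\<forall>a\<in>L. \<forall>b\<in>L. a \<noteq> b \<longrightarrow> \<delta> < dist (sqrt_vec (W a)) (sqrt_vec (W b))"
    using separated_subset_of_cover_num[of K "\<lambda>x. sqrt_vec (W x)" "space M" \<delta>] \<delta>
    unfolding K_def sqrt_X_def by auto
  have D: "\<rho> * n \<le> real D" "real D \<le> \<rho> * n + 1" "1 \<le> D" "D \<le> n"
  proof -
    have \<rho>n: "0 < \<rho> * n" "\<rho> * n \<le> n" using \<rho> n0 by auto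
    then show "\<rho> * n \<le> real D" "real D \<le> \<rho> * n + 1" unfolding D_def by (simp_all add: of_nat_nat)
    show "1 \<le> D" using \<rho>n unfolding D_def by (simp add: le_nat_iff)
    have "\<lceil>\<rho> * n\<rceil> \<le> int n" using \<rho>n(2) by (metis ceiling_le_iff of_int_of_nat_eq)
    then show "D \<le> n" unfolding D_def by (simp only: nat_le_iff)
  qed
  have err2: "exp (\<tau> + sqrt n / 2 - D * \<delta>\<^sup>2 / 2) + 4 * m * n / \<tau>\<^sup>2 \<le> l2"
  proof -
    have "real n * \<delta>\<^sup>2 = real n powr 1 * (real n powr - \<alpha> * real n powr - \<alpha>)"
      using n0 unfolding \<delta>_def power2_eq_square by simp
    also have "\<dots> = real n powr (1 + (- \<alpha> + - \<alpha>))" by (simp only: powr_add[symmetric])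
    also have "1 + (- \<alpha> + - \<alpha>) = 1/2 + 2 * \<eta>" by (simp add: \<alpha>_def)
    finally have "real n * \<delta>\<^sup>2 = real n powr (1/2 + 2 * \<eta>)" .
    moreover have "\<rho> * (real n * \<delta>\<^sup>2) \<le> D * \<delta>\<^sup>2"
      using D(1) by (simp add: mult.assoc[symmetric] mult_right_mono)
    ultimately have "\<rho> * real n powr (1/2 + 2 * \<eta>) \<le> D * \<delta>\<^sup>2" by simp
    then have "exp (\<tau> + sqrt n / 2 - D * \<delta>\<^sup>2 / 2) \<le> exp (ln (l2 / 2))"
      using c2 unfolding \<tau>_def by simp
    then show ?thesis using c1 l2 by (simp add: \<tau>_def m_def)
  qed
  have "t + s \<le> (1 - \<rho>) * (d' * \<alpha>)" using key by (simp add: \<alpha>_def mult.assoc)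
  from ln_power_div_power2_ge[OF K1 lnK n D(4,2) \<rho>(2) this]
  have lnX: "(t + s) * n * ln n - d' * \<alpha> * ln n - n * ln 2 \<le> ln X" unfolding X_def .
  then have "ln 4 \<le> ln X" using c4 unfolding \<alpha>_def by linarith
  then have X4: "4 \<le> real (card L) ^ (n - D) / 2 ^ n" using K1 L(3) by (simp add: X_def)
  have err1: "4 * real CARD('y) * n / \<tau>\<^sup>2 \<le> l1" using c1 by (simp add: \<tau>_def)
  have "0 < \<tau>" "0 < n" using n0 by (auto simp: \<tau>_def)
  from exists_DI_code_ln_card_ge[OF ch L(1,2) _ L(4) \<delta>(1) this D(3,4) X4 err1 err2[unfolded m_def]]
  obtain N u E where code: "DI_code M W n N l1 l2 u E" and N: "1 \<le> N"
      and lnN: "ln X - ln 2 \<le> ln (m * sqrt n + 1) + ln (real N)"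
    using K1 L(3) unfolding X_def m_def by auto
  then have "t * n * ln n < ln (real N)"
    using lnX c5 unfolding \<alpha>_def m_def by (simp add: algebra_simps)
  then have "ereal t < ereal (ln (real N) / (real n * ln n))"
    using lnn n0 by (simp add: less_divide_eq algebra_simps)
  also have "\<dots> \<le> DI_rate M W l1 l2 n" by (rule DI_rate_ge_of_DI_code[OF code n N])
  finally show ?thesis .
qed

text \<open>For 4t < d' < d the parameters r = 4t/d', \<rho> = (1 - r)/4, \<eta> = (1 - r)/16 and
  s = (d'/4 - t)/2 satisfy t + s \<le> (1 - \<rho>) d' (1/4 - \<eta>); every other condition of the
  previous lemma compares powers of n and logarithms.\<close>
lemma eventually_DI_rate_gt:
  fixes W :: "'x \<Rightarrow> 'y::finite \<Rightarrow> real"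
  assumes ch: "channel M W" and ne: "space M \<noteq> {}" and l: "0 < l1" "0 < l2"
    and t: "t > 0" and td: "4 * t < d'" and D: "ereal d' < lower_minkowski_dim (sqrt_X M W)"
  shows "eventually (\<lambda>n. ereal t < DI_rate M W l1 l2 n) sequentially"
proof -
  define r where "r = 4 * t / d'"
  define \<rho> where "\<rho> = (1 - r) / 4"
  define \<eta> where "\<eta> = (1 - r) / 16"
  define s where "s = (d' / 4 - t) / 2"
  define \<alpha> where "\<alpha> = 1/4 - \<eta>"
  define m where "m = real CARD('y)"
  have d': "d' > 0" using t td by simp
  have r: "0 < r" "r < 1" using t td d' by (auto simp: r_def field_simps)
  have \<rho>: "0 < \<rho>" "\<rho> \<le> 1/4" and \<eta>: "\<eta> > 0" "\<eta> < 1/4" and \<alpha>: "\<alpha> > 0"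
    using r by (auto simp: \<rho>_def \<eta>_def \<alpha>_def)
  have s: "s > 0" using td by (simp add: s_def)
  have m: "m > 0" unfolding m_def by simp
  have key: "t + s \<le> (1 - \<rho>) * d' * (1/4 - \<eta>)"
  proof -
    have "t + s = (1 - 2 * \<rho>) * d' / 4" using d' by (simp add: \<rho>_def s_def r_def field_simps)
    also have "\<dots> \<le> (1 - \<rho>)\<^sup>2 * d' / 4"
      using d' by (intro divide_right_mono mult_right_mono) (auto simp: power2_eq_square algebra_simps)
    also have "\<dots> = (1 - \<rho>) * d' * (1/4 - \<eta>)"
      by (simp add: \<eta>_def \<rho>_def field_simps power2_eq_square)
    finally show ?thesis .
  qed
  have "((\<lambda>n. 4 * m * real n / (real n powr (1/2 + \<eta>))\<^sup>2) \<longlongrightarrow> 0) sequentially"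
    using \<eta> m by real_asymp
  then have c1: "eventually (\<lambda>n. 4 * m * n / (real n powr (1/2 + \<eta>))\<^sup>2 < min l1 (l2 / 2)) sequentially"
    using l by (intro order_tendstoD(2)) auto
  have "filterlim (\<lambda>n. real n powr (1/2 + \<eta>) + sqrt n / 2 - \<rho> * real n powr (1/2 + 2 * \<eta>) / 2)
      at_bot sequentially"
    using \<eta> \<rho> by real_asymp
  then have c2: "eventually (\<lambda>n. real n powr (1/2 + \<eta>) + sqrt n / 2 - \<rho> * real n powr (1/2 + 2 * \<eta>) / 2
      \<le> ln (l2 / 2)) sequentially"
    unfolding filterlim_at_bot by blast
  have "filterlim (\<lambda>n. real n powr - \<alpha>) (at_right 0) sequentially" using \<alpha> by real_asymp
  moreover have "eventually (\<lambda>d. ereal d' < ereal (log 2 (real (cover_num (sqrt_X M W) d)) / - log 2 d))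
      (at_right 0)"
    using D unfolding lower_minkowski_dim_def by (rule less_LiminfD)
  ultimately have c3: "eventually (\<lambda>n. d' < log 2 (real (cover_num (sqrt_X M W) (real n powr - \<alpha>)))
      / - log 2 (real n powr - \<alpha>)) sequentially"
    unfolding filterlim_iff by fastforce
  have "filterlim (\<lambda>n. (t + s) * n * ln n - d' * \<alpha> * ln n - n * ln 2) at_top sequentially"
    using t s by real_asymp
  then have c4: "eventually (\<lambda>n. ln 4 \<le> (t + s) * n * ln n - d' * \<alpha> * ln n - n * ln 2) sequentially"
    unfolding filterlim_at_top by blast
  have "filterlim (\<lambda>n. s * n * ln n - d' * \<alpha> * ln n - (real n + 1) * ln 2 - ln (m * sqrt n + 1))
      at_top sequentially"
    using s m by real_asymp
  then have c5: "eventually (\<lambda>n. 1 \<le> s * n * ln n - d' * \<alpha> * ln n - (real n + 1) * ln 2 - ln (m * sqrt n + 1))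
      sequentially"
    unfolding filterlim_at_top by blast
  from c1 c2 c3 c4 c5 eventually_ge_at_top[of 2] show ?thesis
  proof eventually_elim
    case (elim n)
    show ?case
      by (rule DI_rate_gt_at_block_length[OF ch ne l(2) elim(6) \<rho> \<eta>(2) key])
        (use elim(1-5) in \<open>auto simp: \<alpha>_def m_def\<close>)
  qed
qed

lemma liminf_DI_rate_ge_quarter_dim:
  fixes W :: "'x \<Rightarrow> 'y::finite \<Rightarrow> real"
  assumes ch: "channel M W" and ne: "space M \<noteq> {}" and l: "0 < l1" "0 < l2"
  shows "ereal (1/4) * lower_minkowski_dim (sqrt_X M W) \<le> liminf (DI_rate M W l1 l2)"
  unfolding le_Liminf_iff
proof (intro allI impI)
  fix y assume y: "y < ereal (1/4) * lower_minkowski_dim (sqrt_X M W)"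
  let ?D = "lower_minkowski_dim (sqrt_X M W)"
  have D0: "0 \<le> ?D"
    using ne by (intro lower_minkowski_dim_nonneg bounded_sqrt_X ch) (auto simp: sqrt_X_def)
  show "\<forall>\<^sub>F n in sequentially. y < DI_rate M W l1 l2 n"
  proof (cases "y < 0")
    case True
    have "eventually (\<lambda>n. 0 \<le> DI_rate M W l1 l2 n) sequentially"
      using eventually_ge_at_top[of 2] by eventually_elim (use ch ne l in \<open>simp add: DI_rate_nonneg\<close>)
    then show ?thesis by (rule eventually_mono) (use True in \<open>auto intro: order.strict_trans2\<close>)
  next
    case False
    obtain t where t: "y < ereal t" "ereal t < ereal (1/4) * ?D" using ereal_dense2[OF y] by blast
    then have "t > 0" using False by (cases y) auto
    have "ereal (4 * t) < ?D" using t(2) D0 by (cases ?D) auto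
    then obtain d' where "ereal (4 * t) < ereal d'" "ereal d' < ?D" using ereal_dense2 by blast
    then have "eventually (\<lambda>n. ereal t < DI_rate M W l1 l2 n) sequentially"
      using eventually_DI_rate_gt[OF ch ne l \<open>t > 0\<close>] by simp
    then show ?thesis by (rule eventually_mono) (use t(1) in \<open>auto intro: less_trans\<close>)
  qed
qed

theorem theorem6:
  fixes M :: "'x measure" and W :: "'x \<Rightarrow> 'y::finite \<Rightarrow> real" and l1 l2 :: real
  assumes "space M \<noteq> {}"
    and "channel M W"
    and "0 < l1" and "0 < l2" and "l1 + l2 < 1"
  shows "ereal (1/4) * lower_minkowski_dim (sqrt_X M W) \<le> C_DI M W \<and>
           C_DI M W \<le> liminf (DI_rate M W l1 l2) \<and>
           liminf (DI_rate M W l1 l2) \<le> ereal (1/2) * lower_minkowski_dim (sqrt_X M W)"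
proof (intro conjI)
  show "ereal (1/4) * lower_minkowski_dim (sqrt_X M W) \<le> C_DI M W"
    unfolding C_DI_def using liminf_DI_rate_ge_quarter_dim[OF assms(2,1)] by (intro INF_greatest) auto
  show "C_DI M W \<le> liminf (DI_rate M W l1 l2)"
    unfolding C_DI_def using assms by (intro INF_lower2[of "(l1, l2)"]) auto
  show "liminf (DI_rate M W l1 l2) \<le> ereal (1/2) * lower_minkowski_dim (sqrt_X M W)"
    by (rule liminf_DI_rate_le_half_dim[OF assms(2,1,3,4,5)])
qed

end
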